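(* Let $a$ be a spectral measure on $\mathbb S^{n-1}$ and $u\in H^1_{a,0}(\mathbb R^n)$. Then $$\lim_{s\to1}(1-s)\,[u]^2_{H^s_a(\mathbb R^n)}=[u]^2_{H^1_a(\mathbb R^n)}.$$
   Context: A spectral measure is a non-negative finite Borel measure $a$ on $\mathbb S^{n-1}$ with $0<\int_{\mathbb S^{n-1}}da\le\Lambda$. Definitions: $[u]_{H^1_a(\mathbb R^n)}=\Big(\int_{\mathbb R^n}dx\int_{\mathbb S^{n-1}}da(\omega)\,(\nabla u(x)\cdot\omega)^2\Big)^{1/2}$, $\|u\|_{H^1_a(\mathbb R^n)}=[u]_{H^1_a(\mathbb R^n)}+\|u\|_{L^2(\mathbb R^n)}$, $H^1_{a,0}(\mathbb R^n)$ is the closure of $C_c^\infty(\mathbb R^n)$ with respect to $\|\cdot\|_{H^1_a(\mathbb R^n)}$, and for $s\in(0,1)$ $[u]_{H^s_a(\mathbb R^n)}=\Big(\int_{\mathbb R^n}dx\int_{\mathbb R}d\rho\int_{\mathbb S^{n-1}}da(\omega)\,\frac{(u(x)-u(x+\rho\omega))^2}{|\rho|^{1+2s}}\Big)^{1/2}$. *)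

theory Defs
  imports "HOL-Analysis.Analysis"
begin

text \<open>The ambient space R^n is an arbitrary Euclidean space 'a; the sphere S^{n-1} is sphere 0 1.\<close>

definition spectral_measure :: "real \<Rightarrow> 'a::euclidean_space measure \<Rightarrow> bool" where
  "spectral_measure \<Lambda> a \<longleftrightarrow>
     sets a = sets (restrict_space borel (sphere (0::'a) 1)) \<and>
     0 < emeasure a (space a) \<and> emeasure a (space a) \<le> ennreal \<Lambda>"

coinductive smooth_fun :: "('a::euclidean_space \<Rightarrow> real) \<Rightarrow> bool" where
  "(\<forall>x. f differentiable (at x)) \<Longrightarrow>
   (\<forall>v. smooth_fun (\<lambda>x. frechet_derivative f (at x) v)) \<Longrightarrow> smooth_fun f"

definition Cc_inf :: "('a::euclidean_space \<Rightarrow> real) set" where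
  "Cc_inf = {f. smooth_fun f \<and> compact (closure {x. f x \<noteq> 0})}"

text \<open>Squared H^1_a seminorm of a smooth function (nabla f(x) . omega = Df(x) omega).\<close>
definition H1a_sq_smooth :: "'a::euclidean_space measure \<Rightarrow> ('a \<Rightarrow> real) \<Rightarrow> ennreal" where
  "H1a_sq_smooth a f =
     (\<integral>\<^sup>+ x. (\<integral>\<^sup>+ \<omega>. ennreal ((frechet_derivative f (at x) \<omega>)\<^sup>2) \<partial>a) \<partial>lborel)"

definition L2_dist_sq :: "('a::euclidean_space \<Rightarrow> real) \<Rightarrow> ('a \<Rightarrow> real) \<Rightarrow> ennreal" where
  "L2_dist_sq f g = (\<integral>\<^sup>+ x. ennreal ((f x - g x)\<^sup>2) \<partial>lborel)"

definition H1a0_approx :: "'a::euclidean_space measure \<Rightarrow> ('a \<Rightarrow> real) \<Rightarrow> (nat \<Rightarrow> 'a \<Rightarrow> real) \<Rightarrow> bool" where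
  "H1a0_approx a u \<phi> \<longleftrightarrow>
     (\<forall>k. \<phi> k \<in> Cc_inf) \<and>
     (\<forall>e>0. \<exists>N. \<forall>m\<ge>N. \<forall>k\<ge>N.
        H1a_sq_smooth a (\<lambda>x. \<phi> m x - \<phi> k x) + L2_dist_sq (\<phi> m) (\<phi> k) < ennreal e) \<and>
     (\<lambda>k. L2_dist_sq (\<phi> k) u) \<longlonglongrightarrow> 0"

text \<open>H^1_{a,0}: the closure of C_c^infinity (completion), realised by L^2 representatives.\<close>
definition H1a0 :: "'a::euclidean_space measure \<Rightarrow> ('a \<Rightarrow> real) set" where
  "H1a0 a = {u. u \<in> borel_measurable lborel \<and> (\<exists>\<phi>. H1a0_approx a u \<phi>)}"

definition H1a_sq :: "'a::euclidean_space measure \<Rightarrow> ('a \<Rightarrow> real) \<Rightarrow> ennreal" where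
  "H1a_sq a u = (THE L. \<forall>\<phi>. H1a0_approx a u \<phi> \<longrightarrow> (\<lambda>k. H1a_sq_smooth a (\<phi> k)) \<longlonglongrightarrow> L)"

definition Hsa_sq :: "'a::euclidean_space measure \<Rightarrow> real \<Rightarrow> ('a \<Rightarrow> real) \<Rightarrow> ennreal" where
  "Hsa_sq a s u =
     (\<integral>\<^sup>+ x. (\<integral>\<^sup>+ \<rho>. (\<integral>\<^sup>+ \<omega>.
        ennreal ((u x - u (x + \<rho> *\<^sub>R \<omega>))\<^sup>2 / \<bar>\<rho>\<bar> powr (1 + 2 * s)) \<partial>a) \<partial>lborel) \<partial>lborel)"

end

theory Submission
  imports Defs
begin

text \<open>
  By Fubini, [u]^2_{H^s_a} is the integral over the line of q(rho) |rho|^(-1-2s), where q(rho)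
  is the squared L^2(dx da) norm of the increment (x, w) |-> u(x) - u(x + rho w). The integral
  of |rho|^(1-2s) over |rho| <= d is d^(2-2s)/(1-s) while the tail |rho| >= d stays bounded,
  so (1-s) [u]^2_{H^s_a} tends to the limit of q(rho)/rho^2 at 0 whenever q is bounded and
  that limit exists.

  For smooth compactly supported u this limit is [u]^2_{H^1_a}, by dominated convergence of the
  difference quotients. The root sqrt q is a seminorm in u and subadditive in rho, hence
  sqrt q(rho) <= |rho| [u]_{H^1_a}; this bound is uniform along an approximating sequence and
  carries the limit over to all of H^1_{a,0}.
\<close>

section \<open>Square-integrable functions\<close>

definition L2_norm_sq :: "'b measure \<Rightarrow> ('b \<Rightarrow> real) \<Rightarrow> ennreal" where
  "L2_norm_sq M f = (\<integral>\<^sup>+x. ennreal ((f x)\<^sup>2) \<partial>M)"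

lemma L2_norm_sq_uminus [simp]: "L2_norm_sq M (\<lambda>x. - f x) = L2_norm_sq M f"
  by (simp add: L2_norm_sq_def)

lemma L2_norm_sq_add_le:
  assumes [measurable]: "f \<in> borel_measurable M" "g \<in> borel_measurable M"
  shows "L2_norm_sq M (\<lambda>x. f x + g x)
    \<le> L2_norm_sq M f + L2_norm_sq M g + 2 * (\<integral>\<^sup>+x. ennreal \<bar>f x\<bar> * ennreal \<bar>g x\<bar> \<partial>M)"
proof -
  have "L2_norm_sq M (\<lambda>x. f x + g x)
      \<le> (\<integral>\<^sup>+x. ennreal ((f x)\<^sup>2) + ennreal ((g x)\<^sup>2) + 2 * (ennreal \<bar>f x\<bar> * ennreal \<bar>g x\<bar>) \<partial>M)"
    unfolding L2_norm_sq_def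
  proof (rule nn_integral_mono)
    fix x
    have "(f x + g x)\<^sup>2 \<le> (f x)\<^sup>2 + (g x)\<^sup>2 + 2 * (\<bar>f x\<bar> * \<bar>g x\<bar>)"
      by (simp add: power2_sum abs_mult[symmetric])
    from ennreal_leI[OF this] show "ennreal ((f x + g x)\<^sup>2)
        \<le> ennreal ((f x)\<^sup>2) + ennreal ((g x)\<^sup>2) + 2 * (ennreal \<bar>f x\<bar> * ennreal \<bar>g x\<bar>)"
      by (simp add: ennreal_mult[symmetric] flip: ennreal_numeral)
  qed
  also have "\<dots> = L2_norm_sq M f + L2_norm_sq M g + 2 * (\<integral>\<^sup>+x. ennreal \<bar>f x\<bar> * ennreal \<bar>g x\<bar> \<partial>M)"
    by (simp add: nn_integral_add nn_integral_cmult L2_norm_sq_def)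
  finally show ?thesis .
qed

lemma nn_integral_abs_mult_le:
  assumes [measurable]: "f \<in> borel_measurable M" "g \<in> borel_measurable M"
    and fin: "L2_norm_sq M f < \<infinity>" "L2_norm_sq M g < \<infinity>"
  shows "(\<integral>\<^sup>+x. ennreal \<bar>f x\<bar> * ennreal \<bar>g x\<bar> \<partial>M)
    \<le> ennreal (sqrt (enn2real (L2_norm_sq M f)) * sqrt (enn2real (L2_norm_sq M g)))"
proof -
  define A B where "A = enn2real (L2_norm_sq M f)" and "B = enn2real (L2_norm_sq M g)"
  define P where "P = (\<integral>\<^sup>+x. ennreal \<bar>f x\<bar> * ennreal \<bar>g x\<bar> \<partial>M)"
  have AB: "L2_norm_sq M f = ennreal A" "L2_norm_sq M g = ennreal B" "A \<ge> 0" "B \<ge> 0"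
    using fin by (simp_all add: A_def B_def)
  have "P\<^sup>2 \<le> (\<integral>\<^sup>+x. (ennreal \<bar>f x\<bar>)\<^sup>2 \<partial>M) * (\<integral>\<^sup>+x. (ennreal \<bar>g x\<bar>)\<^sup>2 \<partial>M)"
    unfolding P_def by (rule Cauchy_Schwarz_nn_integral) auto
  also have "\<dots> = ennreal (A * B)"
    using AB by (simp add: L2_norm_sq_def ennreal_power ennreal_mult)
  finally have P_sq: "P\<^sup>2 \<le> ennreal (A * B)" .
  then have "P\<^sup>2 < \<infinity>"
    using le_less_trans by fastforce
  then obtain p where p: "P = ennreal p" "p \<ge> 0"
    by (cases P) (auto simp: power_less_top_ennreal)
  have "p\<^sup>2 \<le> A * B"
    using P_sq p AB by (simp add: ennreal_power ennreal_le_iff)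
  then have "p \<le> sqrt A * sqrt B"
    by (metis real_le_rsqrt real_sqrt_mult)
  then show ?thesis
    using p by (simp add: P_def[symmetric] A_def B_def)
qed

lemma L2_norm_sq_add:
  assumes "f \<in> borel_measurable M" "g \<in> borel_measurable M"
    and fin: "L2_norm_sq M f < \<infinity>" "L2_norm_sq M g < \<infinity>"
  shows "L2_norm_sq M (\<lambda>x. f x + g x) < \<infinity>"
    and "sqrt (enn2real (L2_norm_sq M (\<lambda>x. f x + g x)))
           \<le> sqrt (enn2real (L2_norm_sq M f)) + sqrt (enn2real (L2_norm_sq M g))"
proof -
  define A B where "A = enn2real (L2_norm_sq M f)" and "B = enn2real (L2_norm_sq M g)"
  have AB: "L2_norm_sq M f = ennreal A" "L2_norm_sq M g = ennreal B" "A \<ge> 0" "B \<ge> 0"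
    using fin by (simp_all add: A_def B_def)
  have "L2_norm_sq M (\<lambda>x. f x + g x)
      \<le> L2_norm_sq M f + L2_norm_sq M g + 2 * (\<integral>\<^sup>+x. ennreal \<bar>f x\<bar> * ennreal \<bar>g x\<bar> \<partial>M)"
    by (rule L2_norm_sq_add_le[OF assms(1,2)])
  also have "\<dots> \<le> ennreal A + ennreal B + 2 * ennreal (sqrt A * sqrt B)"
    unfolding AB(1,2)
    by (intro add_left_mono mult_left_mono nn_integral_abs_mult_le[OF assms, folded A_def B_def]) simp
  also have "\<dots> = ennreal ((sqrt A + sqrt B)\<^sup>2)"
    using AB by (simp add: power2_sum ennreal_plus ennreal_mult mult.assoc flip: ennreal_numeral)
  finally have sum_le: "L2_norm_sq M (\<lambda>x. f x + g x) \<le> ennreal ((sqrt A + sqrt B)\<^sup>2)" .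
  then show "L2_norm_sq M (\<lambda>x. f x + g x) < \<infinity>"
    using le_less_trans by fastforce
  have "enn2real (L2_norm_sq M (\<lambda>x. f x + g x)) \<le> (sqrt A + sqrt B)\<^sup>2"
    using sum_le by (simp add: enn2real_leI)
  then have "sqrt (enn2real (L2_norm_sq M (\<lambda>x. f x + g x))) \<le> sqrt ((sqrt A + sqrt B)\<^sup>2)"
    by (rule real_sqrt_le_mono)
  then show "sqrt (enn2real (L2_norm_sq M (\<lambda>x. f x + g x)))
      \<le> sqrt (enn2real (L2_norm_sq M f)) + sqrt (enn2real (L2_norm_sq M g))"
    by (simp add: A_def B_def)
qed

definition square_integrable :: "('a::euclidean_space \<Rightarrow> real) \<Rightarrow> bool" where
  "square_integrable f \<longleftrightarrow> f \<in> borel_measurable borel \<and> L2_norm_sq lborel f < \<infinity>"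

lemma square_integrable_add:
  assumes "square_integrable f" "square_integrable g"
  shows "square_integrable (\<lambda>x. f x + g x)"
  using assms L2_norm_sq_add(1)[of f lborel g] by (auto simp: square_integrable_def measurable_lborel1)

lemma square_integrable_uminus: "square_integrable f \<Longrightarrow> square_integrable (\<lambda>x. - f x)"
  by (simp add: square_integrable_def)

lemma square_integrable_diff:
  "square_integrable f \<Longrightarrow> square_integrable g \<Longrightarrow> square_integrable (\<lambda>x. f x - g x)"
  using square_integrable_add[OF _ square_integrable_uminus, of f g] by simp

lemma nn_integral_lborel_translate:
  fixes f :: "'a::euclidean_space \<Rightarrow> ennreal"
  assumes [measurable]: "f \<in> borel_measurable borel"
  shows "(\<integral>\<^sup>+x. f (x + c) \<partial>lborel) = (\<integral>\<^sup>+x. f x \<partial>lborel)"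
proof -
  have "(\<integral>\<^sup>+x. f x \<partial>lborel) = (\<integral>\<^sup>+x. f x \<partial>distr lborel borel ((+) c))"
    by (simp add: lborel_distr_plus)
  also have "\<dots> = (\<integral>\<^sup>+x. f (c + x) \<partial>lborel)"
    by (subst nn_integral_distr) auto
  finally show ?thesis
    by (simp add: add.commute)
qed

section \<open>The fractional energy of a profile on the line\<close>

lemma nn_integral_lborel_abs:
  fixes f :: "real \<Rightarrow> ennreal"
  assumes [measurable]: "f \<in> borel_measurable borel"
  shows "(\<integral>\<^sup>+x. f \<bar>x\<bar> \<partial>lborel) = 2 * (\<integral>\<^sup>+x. f x * indicator {0..} x \<partial>lborel)"
proof -
  have "(\<integral>\<^sup>+x. f \<bar>x\<bar> \<partial>lborel)
      = (\<integral>\<^sup>+x. f x * indicator {0..} x + f (- x) * indicator {0..} (- x) \<partial>lborel)"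
    by (rule nn_integral_cong_AE)
      (use AE_lborel_singleton[of 0] in \<open>eventually_elim, auto simp: indicator_def\<close>)
  also have "\<dots> = (\<integral>\<^sup>+x. f x * indicator {0..} x \<partial>lborel)
      + (\<integral>\<^sup>+x. f (- x) * indicator {0..} (- x) \<partial>lborel)"
    by (rule nn_integral_add) auto
  also have "(\<integral>\<^sup>+x. f (- x) * indicator {0..} (- x) \<partial>lborel) = (\<integral>\<^sup>+x. f x * indicator {0..} x \<partial>lborel)"
    using nn_integral_real_affine[of "\<lambda>x. f x * indicator {0..} x" "-1" 0] by simp
  finally show ?thesis
    by (simp add: mult_2)
qed

lemma nn_integral_abs_powr_near_zero:
  assumes "s < 1" "d > 0"
  shows "(\<integral>\<^sup>+x. ennreal (\<bar>x\<bar> powr (1 - 2 * s)) * indicator {x. \<bar>x\<bar> \<le> d} x \<partial>lborel)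
    = ennreal (d powr (2 - 2 * s) / (1 - s))"
proof -
  have "((\<lambda>x. x powr (1 - 2 * s)) has_integral (d powr (2 - 2 * s) / (2 - 2 * s))) {0..d}"
    using has_integral_powr_from_0[of "1 - 2 * s" d] assms by (simp add: algebra_simps)
  from nn_integral_has_integral_lebesgue'[OF _ this]
  have half: "(\<integral>\<^sup>+x. ennreal (x powr (1 - 2 * s)) * indicator {0..d} x \<partial>lborel)
      = ennreal (d powr (2 - 2 * s) / (2 - 2 * s))"
    by simp
  have "(\<integral>\<^sup>+x. ennreal (\<bar>x\<bar> powr (1 - 2 * s)) * indicator {x. \<bar>x\<bar> \<le> d} x \<partial>lborel)
      = (\<integral>\<^sup>+x. (\<lambda>t. ennreal (t powr (1 - 2 * s)) * indicator {..d} t) \<bar>x\<bar> \<partial>lborel)"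
    by (simp add: indicator_def)
  also have "\<dots> = 2 * (\<integral>\<^sup>+x. ennreal (x powr (1 - 2 * s)) * indicator {0..d} x \<partial>lborel)"
    by (subst nn_integral_lborel_abs, simp)
      (intro arg_cong[where f="(*) 2"] nn_integral_cong, auto simp: indicator_def)
  also have "\<dots> = ennreal 2 * ennreal (d powr (2 - 2 * s) / (2 - 2 * s))"
    by (simp add: half)
  also have "\<dots> = ennreal (d powr (2 - 2 * s) / (1 - s))"
    using assms by (subst ennreal_mult[symmetric]) (auto simp: field_simps)
  finally show ?thesis .
qed

lemma nn_integral_abs_powr_tail:
  assumes "s > 0" "d > 0"
  shows "(\<integral>\<^sup>+x. ennreal (\<bar>x\<bar> powr (- 1 - 2 * s)) * indicator {x. d \<le> \<bar>x\<bar>} x \<partial>lborel)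
    = ennreal (d powr (- 2 * s) / s)"
proof -
  have "((\<lambda>x. x powr (- 1 - 2 * s)) has_integral (d powr (- 2 * s) / (2 * s))) {d..}"
    using has_integral_powr_to_inf[of "- 1 - 2 * s" d] assms by (simp add: algebra_simps)
  from nn_integral_has_integral_lebesgue'[OF _ this]
  have half: "(\<integral>\<^sup>+x. ennreal (x powr (- 1 - 2 * s)) * indicator {d..} x \<partial>lborel)
      = ennreal (d powr (- 2 * s) / (2 * s))"
    by simp
  have "(\<integral>\<^sup>+x. ennreal (\<bar>x\<bar> powr (- 1 - 2 * s)) * indicator {x. d \<le> \<bar>x\<bar>} x \<partial>lborel)
      = (\<integral>\<^sup>+x. (\<lambda>t. ennreal (t powr (- 1 - 2 * s)) * indicator {d..} t) \<bar>x\<bar> \<partial>lborel)"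
    by (simp add: indicator_def)
  also have "\<dots> = 2 * (\<integral>\<^sup>+x. ennreal (x powr (- 1 - 2 * s)) * indicator {d..} x \<partial>lborel)"
    by (subst nn_integral_lborel_abs, simp)
      (intro arg_cong[where f="(*) 2"] nn_integral_cong, use assms in \<open>auto simp: indicator_def\<close>)
  also have "\<dots> = ennreal (d powr (- 2 * s) / s)"
    using assms by (simp add: half ennreal_mult[symmetric] flip: ennreal_numeral)
  finally show ?thesis .
qed

definition frac_energy :: "(real \<Rightarrow> real) \<Rightarrow> real \<Rightarrow> ennreal" where
  "frac_energy q s = (\<integral>\<^sup>+\<rho>. ennreal (q \<rho>) * ennreal (1 / \<bar>\<rho>\<bar> powr (1 + 2 * s)) \<partial>lborel)"

lemma power2_div_abs_powr:
  fixes \<rho> s :: real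
  shows "\<rho> \<noteq> 0 \<Longrightarrow> \<rho>\<^sup>2 / \<bar>\<rho>\<bar> powr (1 + 2 * s) = \<bar>\<rho>\<bar> powr (1 - 2 * s)"
proof -
  assume "\<rho> \<noteq> 0"
  have "\<bar>\<rho>\<bar> powr (1 - 2 * s) = \<bar>\<rho>\<bar> powr (2 - (1 + 2 * s))"
    by (simp add: algebra_simps)
  also have "\<dots> = \<bar>\<rho>\<bar> powr 2 / \<bar>\<rho>\<bar> powr (1 + 2 * s)"
    by (rule powr_diff)
  also have "\<bar>\<rho>\<bar> powr 2 = \<rho>\<^sup>2"
    using \<open>\<rho> \<noteq> 0\<close> powr_realpow[of "\<bar>\<rho>\<bar>" 2] by simp
  finally show ?thesis
    by simp
qed

lemma one_div_abs_powr: "(1::real) / \<bar>\<rho>\<bar> powr (1 + 2 * s) = \<bar>\<rho>\<bar> powr (- 1 - 2 * s)"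
  using powr_minus_divide[of "\<bar>\<rho>\<bar>" "1 + 2 * s"] by (simp add: algebra_simps)

lemma div_abs_powr_le_split:
  fixes q \<rho> :: real
  assumes "C \<ge> 0" "0 \<le> q" "q \<le> B" "\<bar>\<rho>\<bar> \<le> d \<Longrightarrow> q \<le> C * \<rho>\<^sup>2"
  shows "q / \<bar>\<rho>\<bar> powr (1 + 2 * s)
    \<le> C * (\<bar>\<rho>\<bar> powr (1 - 2 * s) * indicator {x. \<bar>x\<bar> \<le> d} \<rho>)
      + B * (\<bar>\<rho>\<bar> powr (- 1 - 2 * s) * indicator {x. d \<le> \<bar>x\<bar>} \<rho>)"
proof -
  have B: "B \<ge> 0"
    using assms by simp
  consider "\<rho> = 0" | "\<rho> \<noteq> 0" "\<bar>\<rho>\<bar> \<le> d" | "\<bar>\<rho>\<bar> > d"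
    by fastforce
  then show ?thesis
  proof cases
    case 1
    then show ?thesis
      using B assms(1) by (simp add: indicator_def)
  next
    case 2
    have "q / \<bar>\<rho>\<bar> powr (1 + 2 * s) \<le> C * (\<rho>\<^sup>2 / \<bar>\<rho>\<bar> powr (1 + 2 * s))"
      using assms(4)[OF 2(2)] by (simp add: divide_right_mono)
    also have "\<dots> = C * (\<bar>\<rho>\<bar> powr (1 - 2 * s) * indicator {x. \<bar>x\<bar> \<le> d} \<rho>)"
      using 2 by (simp add: power2_div_abs_powr indicator_def)
    finally show ?thesis
      by (rule add_increasing2[rotated]) (use B in simp)
  next
    case 3
    have "q / \<bar>\<rho>\<bar> powr (1 + 2 * s) \<le> B * (1 / \<bar>\<rho>\<bar> powr (1 + 2 * s))"
      using assms(3) by (simp add: divide_right_mono)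
    then show ?thesis
      using 3 assms(1) by (simp add: one_div_abs_powr indicator_def)
  qed
qed

lemma split_le_div_abs_powr:
  fixes q \<rho> :: real
  assumes "c \<ge> 0" "q \<ge> 0" "\<bar>\<rho>\<bar> \<le> d \<Longrightarrow> c * \<rho>\<^sup>2 \<le> q"
  shows "c * (\<bar>\<rho>\<bar> powr (1 - 2 * s) * indicator {x. \<bar>x\<bar> \<le> d} \<rho>) \<le> q / \<bar>\<rho>\<bar> powr (1 + 2 * s)"
proof (cases "\<rho> \<noteq> 0 \<and> \<bar>\<rho>\<bar> \<le> d")
  case True
  then have "c * \<bar>\<rho>\<bar> powr (1 - 2 * s) = c * \<rho>\<^sup>2 / \<bar>\<rho>\<bar> powr (1 + 2 * s)"
    by (simp add: power2_div_abs_powr[symmetric])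
  also have "\<dots> \<le> q / \<bar>\<rho>\<bar> powr (1 + 2 * s)"
    using True assms(3) by (simp add: divide_right_mono)
  finally show ?thesis
    using True by (simp add: indicator_def)
qed (use assms(2) in \<open>auto simp: indicator_def\<close>)

lemma frac_energy_integrand:
  "x \<ge> 0 \<Longrightarrow> ennreal x * ennreal (1 / \<bar>\<rho>\<bar> powr (1 + 2 * s)) = ennreal (x / \<bar>\<rho>\<bar> powr (1 + 2 * s))"
  by (subst ennreal_mult[symmetric]) (auto simp: divide_inverse)

lemma frac_energy_le:
  assumes s: "0 < s" "s < 1" and "d > 0" "C \<ge> 0" "\<And>\<rho>. q \<rho> \<ge> 0" "\<And>\<rho>. q \<rho> \<le> B"
    and "\<And>\<rho>. \<bar>\<rho>\<bar> \<le> d \<Longrightarrow> q \<rho> \<le> C * \<rho>\<^sup>2"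
  shows "frac_energy q s \<le> ennreal (C * (d powr (2 - 2 * s) / (1 - s)) + B * (d powr (- 2 * s) / s))"
proof -
  have B: "B \<ge> 0"
    using assms(5,6)[of 0] by simp
  have pointwise: "ennreal (q \<rho>) * ennreal (1 / \<bar>\<rho>\<bar> powr (1 + 2 * s))
      \<le> ennreal C * (ennreal (\<bar>\<rho>\<bar> powr (1 - 2 * s)) * indicator {x. \<bar>x\<bar> \<le> d} \<rho>)
        + ennreal B * (ennreal (\<bar>\<rho>\<bar> powr (- 1 - 2 * s)) * indicator {x. d \<le> \<bar>x\<bar>} \<rho>)" for \<rho>
  proof -
    have "ennreal (q \<rho>) * ennreal (1 / \<bar>\<rho>\<bar> powr (1 + 2 * s)) = ennreal (q \<rho> / \<bar>\<rho>\<bar> powr (1 + 2 * s))"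
      by (rule frac_energy_integrand[OF assms(5)])
    also have "\<dots> \<le> ennreal (C * (\<bar>\<rho>\<bar> powr (1 - 2 * s) * indicator {x. \<bar>x\<bar> \<le> d} \<rho>)
        + B * (\<bar>\<rho>\<bar> powr (- 1 - 2 * s) * indicator {x. d \<le> \<bar>x\<bar>} \<rho>))"
      by (intro ennreal_leI div_abs_powr_le_split assms)
    also have "\<dots> = ennreal C * (ennreal (\<bar>\<rho>\<bar> powr (1 - 2 * s)) * indicator {x. \<bar>x\<bar> \<le> d} \<rho>)
        + ennreal B * (ennreal (\<bar>\<rho>\<bar> powr (- 1 - 2 * s)) * indicator {x. d \<le> \<bar>x\<bar>} \<rho>)"
      using B assms(4) by (subst ennreal_plus) (auto simp: ennreal_mult indicator_def)
    finally show ?thesis .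
  qed
  have "frac_energy q s
      \<le> (\<integral>\<^sup>+\<rho>. ennreal C * (ennreal (\<bar>\<rho>\<bar> powr (1 - 2 * s)) * indicator {x. \<bar>x\<bar> \<le> d} \<rho>)
        + ennreal B * (ennreal (\<bar>\<rho>\<bar> powr (- 1 - 2 * s)) * indicator {x. d \<le> \<bar>x\<bar>} \<rho>) \<partial>lborel)"
    unfolding frac_energy_def by (rule nn_integral_mono) (rule pointwise)
  also have "\<dots> = ennreal C * ennreal (d powr (2 - 2 * s) / (1 - s)) + ennreal B * ennreal (d powr (- 2 * s) / s)"
    using s \<open>d > 0\<close>
    by (simp add: nn_integral_add nn_integral_cmult nn_integral_abs_powr_near_zero nn_integral_abs_powr_tail)
  also have "\<dots> = ennreal (C * (d powr (2 - 2 * s) / (1 - s)) + B * (d powr (- 2 * s) / s))"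
    using s B assms(4) by (simp add: ennreal_mult'[symmetric])
  finally show ?thesis .
qed

lemma frac_energy_ge:
  assumes s: "0 < s" "s < 1" and "d > 0" "c \<ge> 0" "\<And>\<rho>. q \<rho> \<ge> 0"
    and "\<And>\<rho>. \<bar>\<rho>\<bar> \<le> d \<Longrightarrow> c * \<rho>\<^sup>2 \<le> q \<rho>"
  shows "ennreal (c * (d powr (2 - 2 * s) / (1 - s))) \<le> frac_energy q s"
proof -
  have "ennreal (c * (d powr (2 - 2 * s) / (1 - s)))
      = (\<integral>\<^sup>+\<rho>. ennreal c * (ennreal (\<bar>\<rho>\<bar> powr (1 - 2 * s)) * indicator {x. \<bar>x\<bar> \<le> d} \<rho>) \<partial>lborel)"
    using assms(1-4) by (simp add: nn_integral_cmult nn_integral_abs_powr_near_zero ennreal_mult'[symmetric])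
  also have "\<dots> \<le> frac_energy q s"
    unfolding frac_energy_def
  proof (rule nn_integral_mono)
    fix \<rho> :: real
    have "ennreal c * (ennreal (\<bar>\<rho>\<bar> powr (1 - 2 * s)) * indicator {x. \<bar>x\<bar> \<le> d} \<rho>)
        = ennreal (c * (\<bar>\<rho>\<bar> powr (1 - 2 * s) * indicator {x. \<bar>x\<bar> \<le> d} \<rho>))"
      using assms(4) by (simp add: indicator_def ennreal_mult)
    also have "\<dots> \<le> ennreal (q \<rho> / \<bar>\<rho>\<bar> powr (1 + 2 * s))"
      by (intro ennreal_leI split_le_div_abs_powr assms)
    also have "\<dots> = ennreal (q \<rho>) * ennreal (1 / \<bar>\<rho>\<bar> powr (1 + 2 * s))"
      by (rule frac_energy_integrand[OF assms(5), symmetric])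
    finally show "ennreal c * (ennreal (\<bar>\<rho>\<bar> powr (1 - 2 * s)) * indicator {x. \<bar>x\<bar> \<le> d} \<rho>) \<le> \<dots>" .
  qed
  finally show ?thesis .
qed

lemma quadratic_bounds_near_zero:
  fixes q :: "real \<Rightarrow> real"
  assumes lim: "((\<lambda>\<rho>. q \<rho> / \<rho>\<^sup>2) \<longlongrightarrow> L) (at 0)" and "q 0 = 0" and "e > 0"
  obtains d where "d > 0" "\<And>\<rho>. \<bar>\<rho>\<bar> \<le> d \<Longrightarrow> (L - e) * \<rho>\<^sup>2 \<le> q \<rho> \<and> q \<rho> \<le> (L + e) * \<rho>\<^sup>2"
proof -
  obtain \<delta> where \<delta>: "\<delta> > 0" "\<And>\<rho>. \<rho> \<noteq> 0 \<Longrightarrow> dist \<rho> 0 < \<delta> \<Longrightarrow> dist (q \<rho> / \<rho>\<^sup>2) L < e"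
    using tendstoD[OF lim \<open>e > 0\<close>] unfolding eventually_at by auto
  have "(L - e) * \<rho>\<^sup>2 \<le> q \<rho> \<and> q \<rho> \<le> (L + e) * \<rho>\<^sup>2" if "\<bar>\<rho>\<bar> \<le> \<delta> / 2" for \<rho>
  proof (cases "\<rho> = 0")
    case False
    then have "\<bar>q \<rho> / \<rho>\<^sup>2 - L\<bar> < e"
      using \<delta> that by (simp add: dist_real_def)
    then have "L - e < q \<rho> / \<rho>\<^sup>2" "q \<rho> / \<rho>\<^sup>2 < L + e"
      by linarith+
    then have "(L - e) * \<rho>\<^sup>2 < q \<rho>" "q \<rho> < (L + e) * \<rho>\<^sup>2"
      using False by (simp_all add: less_divide_eq divide_less_eq)
    then show ?thesis
      by simp
  qed (use \<open>q 0 = 0\<close> in simp)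
  then show ?thesis
    using \<delta>(1) by (intro that[of "\<delta> / 2"]) auto
qed

lemma frac_energy_eventually_gt:
  fixes q :: "real \<Rightarrow> real"
  assumes q0: "\<And>\<rho>. q \<rho> \<ge> 0" and "q 0 = 0" and lim: "((\<lambda>\<rho>. q \<rho> / \<rho>\<^sup>2) \<longlongrightarrow> L) (at 0)"
    and c: "0 \<le> c" "c < L"
  shows "\<forall>\<^sub>F s in at_left 1. ennreal c < ennreal (1 - s) * frac_energy q s"
proof -
  define e where "e = (L - c) / 2"
  have e: "e > 0" "0 \<le> L - e" "c < L - e"
    using c by (simp_all add: e_def field_simps)
  obtain d where d: "d > 0" "\<And>\<rho>. \<bar>\<rho>\<bar> \<le> d \<Longrightarrow> (L - e) * \<rho>\<^sup>2 \<le> q \<rho> \<and> q \<rho> \<le> (L + e) * \<rho>\<^sup>2"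
    using quadratic_bounds_near_zero[OF lim \<open>q 0 = 0\<close> e(1)] by metis
  have "((\<lambda>s. (L - e) * d powr (2 - 2 * s)) \<longlongrightarrow> (L - e) * d powr (2 - 2 * 1)) (at_left 1)"
    using d(1) by (intro tendsto_intros) auto
  then have "((\<lambda>s. (L - e) * d powr (2 - 2 * s)) \<longlongrightarrow> L - e) (at_left 1)"
    using d(1) by simp
  then have "\<forall>\<^sub>F s in at_left 1. c < (L - e) * d powr (2 - 2 * s)"
    using e(3) by (rule order_tendstoD)
  moreover have "\<forall>\<^sub>F s in at_left (1::real). s \<in> {0<..<1}"
    by (rule eventually_at_left_real) simp
  ultimately show ?thesis
  proof eventually_elim
    case (elim s)
    have "ennreal c < ennreal ((L - e) * d powr (2 - 2 * s))"
      using elim c by (simp add: ennreal_less_iff)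
    also have "(L - e) * d powr (2 - 2 * s) = (1 - s) * ((L - e) * (d powr (2 - 2 * s) / (1 - s)))"
      using elim by simp
    also have "ennreal \<dots> = ennreal (1 - s) * ennreal ((L - e) * (d powr (2 - 2 * s) / (1 - s)))"
      by (rule ennreal_mult) (use elim e in auto)
    also have "\<dots> \<le> ennreal (1 - s) * frac_energy q s"
      using elim d(1) e(2) by (intro mult_left_mono frac_energy_ge q0 d(2)[THEN conjunct1]) auto
    finally show ?case .
  qed
qed

lemma frac_energy_eventually_lt:
  fixes q :: "real \<Rightarrow> real"
  assumes q0: "\<And>\<rho>. q \<rho> \<ge> 0" and qB: "\<And>\<rho>. q \<rho> \<le> B" and "q 0 = 0"
    and lim: "((\<lambda>\<rho>. q \<rho> / \<rho>\<^sup>2) \<longlongrightarrow> L) (at 0)" and "L \<ge> 0" "L < c"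
  shows "\<forall>\<^sub>F s in at_left 1. ennreal (1 - s) * frac_energy q s < ennreal c"
proof -
  define e where "e = (c - L) / 2"
  have e: "e > 0" "0 \<le> L + e" "L + e < c"
    using assms(5,6) by (simp_all add: e_def field_simps)
  have B: "B \<ge> 0"
    using q0[of 0] qB[of 0] by simp
  obtain d where d: "d > 0" "\<And>\<rho>. \<bar>\<rho>\<bar> \<le> d \<Longrightarrow> (L - e) * \<rho>\<^sup>2 \<le> q \<rho> \<and> q \<rho> \<le> (L + e) * \<rho>\<^sup>2"
    using quadratic_bounds_near_zero[OF lim \<open>q 0 = 0\<close> e(1)] by metis
  define U where "U s = (L + e) * d powr (2 - 2 * s) + (1 - s) * (B * (d powr (- 2 * s) / s))" for s
  have "(U \<longlongrightarrow> (L + e) * d powr (2 - 2 * 1) + (1 - 1) * (B * (d powr (- 2 * 1) / 1))) (at_left 1)"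
    unfolding U_def using d(1) by (intro tendsto_intros) auto
  then have "(U \<longlongrightarrow> L + e) (at_left 1)"
    using d(1) by simp
  then have "\<forall>\<^sub>F s in at_left 1. U s < c"
    using e(3) by (rule order_tendstoD)
  moreover have "\<forall>\<^sub>F s in at_left (1::real). s \<in> {0<..<1}"
    by (rule eventually_at_left_real) simp
  ultimately show ?thesis
  proof eventually_elim
    case (elim s)
    have "ennreal (1 - s) * frac_energy q s
        \<le> ennreal (1 - s) * ennreal ((L + e) * (d powr (2 - 2 * s) / (1 - s)) + B * (d powr (- 2 * s) / s))"
      using elim d(1) e(2) by (intro mult_left_mono frac_energy_le q0 qB d(2)[THEN conjunct2]) auto
    also have "\<dots> = ennreal ((1 - s) * ((L + e) * (d powr (2 - 2 * s) / (1 - s)) + B * (d powr (- 2 * s) / s)))"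
      by (rule ennreal_mult[symmetric]) (use elim B e(2) in auto)
    also have "(1 - s) * ((L + e) * (d powr (2 - 2 * s) / (1 - s)) + B * (d powr (- 2 * s) / s)) = U s"
      using elim by (simp add: U_def distrib_left)
    also have "\<dots> < ennreal c"
      using elim e by (intro ennreal_lessI) auto
    finally show ?case .
  qed
qed

lemma frac_energy_tendsto:
  fixes q :: "real \<Rightarrow> real"
  assumes "\<And>\<rho>. q \<rho> \<ge> 0" "\<And>\<rho>. q \<rho> \<le> B" "q 0 = 0"
    and "((\<lambda>\<rho>. q \<rho> / \<rho>\<^sup>2) \<longlongrightarrow> L) (at 0)" and "L \<ge> 0"
  shows "((\<lambda>s. ennreal (1 - s) * frac_energy q s) \<longlongrightarrow> ennreal L) (at_left 1)"
proof (rule order_tendstoI)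
  fix y
  assume "y < ennreal L"
  then obtain c where "y = ennreal c" "0 \<le> c" "c < L"
    by (cases y) (auto simp: ennreal_less_iff)
  then show "\<forall>\<^sub>F s in at_left 1. y < ennreal (1 - s) * frac_energy q s"
    by (simp add: frac_energy_eventually_gt[OF assms(1,3,4)])
next
  fix y
  assume "ennreal L < y"
  then obtain z where z: "ennreal L < z" "z < y"
    using dense by blast
  then obtain c where "z = ennreal c" "0 \<le> c"
    by (cases z) auto
  with z assms(5) have "L < c" "ennreal c < y"
    by (simp_all add: ennreal_less_iff)
  have "\<forall>\<^sub>F s in at_left 1. ennreal (1 - s) * frac_energy q s < ennreal c"
    by (rule frac_energy_eventually_lt[OF assms \<open>L < c\<close>])
  then show "\<forall>\<^sub>F s in at_left 1. ennreal (1 - s) * frac_energy q s < y"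
    by (rule eventually_mono) (use \<open>ennreal c < y\<close> in auto)
qed

section \<open>Smooth compactly supported functions\<close>

abbreviation Df :: "('a::euclidean_space \<Rightarrow> real) \<Rightarrow> 'a \<Rightarrow> 'a \<Rightarrow> real" where
  "Df f x \<equiv> frechet_derivative f (at x)"

lemma smooth_fun_differentiable: "smooth_fun f \<Longrightarrow> f differentiable (at x)"
  by (erule smooth_fun.cases) auto

lemma smooth_fun_Df: "smooth_fun f \<Longrightarrow> smooth_fun (\<lambda>x. Df f x v)"
  by (erule smooth_fun.cases) auto

lemma smooth_fun_has_derivative: "smooth_fun f \<Longrightarrow> (f has_derivative Df f x) (at x)"
  using smooth_fun_differentiable frechet_derivative_works by blast

lemma smooth_fun_continuous_on: "smooth_fun f \<Longrightarrow> continuous_on S f"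
  using smooth_fun_differentiable differentiable_imp_continuous_on
    differentiable_at_imp_differentiable_on by blast

lemma smooth_fun_diff:
  assumes "smooth_fun f" "smooth_fun g"
  shows "smooth_fun (\<lambda>x. f x - g x)"
proof -
  define X :: "('a \<Rightarrow> real) \<Rightarrow> bool"
    where "X h \<longleftrightarrow> (\<exists>f g. h = (\<lambda>x. f x - g x) \<and> smooth_fun f \<and> smooth_fun g)" for h
  have "X (\<lambda>x. f x - g x)"
    using assms by (auto simp: X_def)
  then show ?thesis
  proof (rule smooth_fun.coinduct[of X])
    fix h
    assume "X h"
    then obtain f g where h: "h = (\<lambda>x. f x - g x)" and f: "smooth_fun f" and g: "smooth_fun g"
      by (auto simp: X_def)
    have der: "(h has_derivative (\<lambda>v. Df f x v - Df g x v)) (at x)" for x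
      unfolding h by (intro has_derivative_diff smooth_fun_has_derivative f g)
    have "X (\<lambda>x. Df h x v)" for v
    proof -
      have eq: "(\<lambda>x. Df h x v) = (\<lambda>x. Df f x v - Df g x v)"
        using der[THEN frechet_derivative_at] by metis
      show ?thesis
        unfolding X_def eq
        by (rule exI[of _ "\<lambda>x. Df f x v"], rule exI[of _ "\<lambda>x. Df g x v"])
          (simp add: smooth_fun_Df f g)
    qed
    then show "\<exists>f. h = f \<and> (\<forall>x. f differentiable at x) \<and>
        (\<forall>v. X (\<lambda>x. Df f x v) \<or> smooth_fun (\<lambda>x. Df f x v))"
      using der by (auto simp: differentiable_def)
  qed
qed

definition tsupport :: "('a::topological_space \<Rightarrow> real) \<Rightarrow> 'a set" where
  "tsupport f = closure {x. f x \<noteq> 0}"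

lemma closed_tsupport: "closed (tsupport f)"
  by (simp add: tsupport_def)

lemma not_in_tsupport: "x \<notin> tsupport f \<Longrightarrow> f x = 0"
  using closure_subset[of "{x. f x \<noteq> 0}"] unfolding tsupport_def by blast

lemma Cc_inf_iff: "f \<in> Cc_inf \<longleftrightarrow> smooth_fun f \<and> compact (tsupport f)"
  by (simp add: Cc_inf_def tsupport_def)

lemma compact_subset_tsupport:
  fixes f g :: "'a::euclidean_space \<Rightarrow> real"
  assumes "compact K" "\<And>x. x \<notin> K \<Longrightarrow> f x = 0"
  shows "compact (tsupport f)"
proof -
  have "tsupport f \<subseteq> closure K"
    unfolding tsupport_def using assms(2) by (intro closure_mono) auto
  then have "bounded (tsupport f)"
    using assms(1) by (meson bounded_closure bounded_subset compact_imp_bounded)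
  then show ?thesis
    using closed_tsupport by (simp add: compact_eq_bounded_closed)
qed

lemma Cc_inf_diff:
  assumes "f \<in> Cc_inf" "g \<in> Cc_inf"
  shows "(\<lambda>x. f x - g x) \<in> Cc_inf"
proof -
  have "compact (tsupport f \<union> tsupport g)"
    using assms by (simp add: Cc_inf_iff compact_Un)
  then have "compact (tsupport (\<lambda>x. f x - g x))"
    by (rule compact_subset_tsupport) (simp add: not_in_tsupport)
  then show ?thesis
    using assms by (simp add: Cc_inf_iff smooth_fun_diff)
qed

lemma Df_outside_tsupport:
  assumes "x \<notin> tsupport f"
  shows "Df f x = (\<lambda>_. 0)"
proof -
  have "((\<lambda>_. 0) has_derivative (\<lambda>_. 0)) (at x)"
    by simp
  then have "(f has_derivative (\<lambda>_. 0)) (at x)"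
    by (rule has_derivative_transform_within_open[where s="- tsupport f"])
      (use assms closed_tsupport not_in_tsupport in auto)
  then show ?thesis
    by (rule frechet_derivative_at[symmetric])
qed

lemma continuous_compact_tsupport_bounded:
  fixes f :: "'a::euclidean_space \<Rightarrow> real"
  assumes "continuous_on UNIV f" "compact (tsupport f)"
  obtains B where "B \<ge> 0" "\<And>x. \<bar>f x\<bar> \<le> B"
proof -
  obtain B where B: "\<forall>x\<in>tsupport f. \<bar>f x\<bar> \<le> B"
    using compact_imp_bounded[OF compact_continuous_image[OF continuous_on_subset[OF assms(1)] assms(2)]]
    by (auto simp: bounded_iff)
  have "\<bar>f x\<bar> \<le> max B 0" for x
    using B not_in_tsupport[of x f] by (cases "x \<in> tsupport f") (auto simp: le_max_iff_disj)
  then show ?thesis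
    by (intro that[of "max B 0"]) auto
qed

lemma Cc_inf_Df_bounded:
  assumes "\<psi> \<in> Cc_inf"
  obtains C where "C \<ge> 0" "\<And>x v. \<bar>Df \<psi> x v\<bar> \<le> C * norm v"
proof -
  have smooth: "smooth_fun \<psi>" and supp: "compact (tsupport \<psi>)"
    using assms by (simp_all add: Cc_inf_iff)
  have "\<exists>c. \<forall>x. \<bar>Df \<psi> x i\<bar> \<le> c" for i
  proof -
    have "compact (tsupport (\<lambda>x. Df \<psi> x i))"
      using supp by (rule compact_subset_tsupport) (simp add: Df_outside_tsupport)
    then obtain B where "\<And>x. \<bar>Df \<psi> x i\<bar> \<le> B"
      using continuous_compact_tsupport_bounded[OF smooth_fun_continuous_on[OF smooth_fun_Df[OF smooth]]]
      by blast
    then show ?thesis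
      by blast
  qed
  then obtain c where c: "\<And>i x. \<bar>Df \<psi> x i\<bar> \<le> c i"
    by metis
  have bound: "\<bar>Df \<psi> x v\<bar> \<le> (\<Sum>i\<in>Basis. c i) * norm v" for x v
  proof -
    have lin: "linear (Df \<psi> x)"
      using smooth_fun_has_derivative[OF smooth] has_derivative_linear by blast
    have "Df \<psi> x v = Df \<psi> x (\<Sum>i\<in>Basis. (v \<bullet> i) *\<^sub>R i)"
      by (simp add: euclidean_representation)
    also have "\<dots> = (\<Sum>i\<in>Basis. (v \<bullet> i) * Df \<psi> x i)"
      using lin by (simp add: linear_sum linear_scale)
    finally have "\<bar>Df \<psi> x v\<bar> = \<bar>\<Sum>i\<in>Basis. (v \<bullet> i) * Df \<psi> x i\<bar>"
      by simp
    also have "\<dots> \<le> (\<Sum>i\<in>Basis. \<bar>v \<bullet> i\<bar> * \<bar>Df \<psi> x i\<bar>)"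
      unfolding abs_mult[symmetric] by (rule sum_abs)
    also have "\<dots> \<le> (\<Sum>i\<in>Basis. norm v * c i)"
      by (intro sum_mono mult_mono) (auto simp: Basis_le_norm c)
    finally show ?thesis
      by (simp add: sum_distrib_left mult.commute)
  qed
  have "(\<Sum>i\<in>Basis. c i) \<ge> 0"
    using c by (intro sum_nonneg) (meson abs_ge_zero order.trans)
  then show ?thesis
    using bound by (rule that)
qed

lemma Cc_inf_lipschitz:
  assumes "\<psi> \<in> Cc_inf" "C \<ge> 0" "\<And>x v. \<bar>Df \<psi> x v\<bar> \<le> C * norm v"
  shows "\<bar>\<psi> x - \<psi> y\<bar> \<le> C * norm (x - y)"
proof -
  have "norm (\<psi> x - \<psi> y) \<le> C * norm (x - y)"
  proof (rule differentiable_bound[where S=UNIV and f'="\<lambda>x. Df \<psi> x"])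
    show "(\<psi> has_derivative Df \<psi> z) (at z within UNIV)" for z
      using assms(1) by (simp add: Cc_inf_iff smooth_fun_has_derivative)
    show "onorm (Df \<psi> z) \<le> C" for z
      by (rule onorm_le) (use assms(3) in auto)
  qed auto
  then show ?thesis
    by simp
qed

lemma Cc_inf_difference_quotient_tendsto:
  assumes "\<psi> \<in> Cc_inf"
  shows "((\<lambda>r. (\<psi> x - \<psi> (x + r *\<^sub>R w)) / r) \<longlongrightarrow> - Df \<psi> x w) (at 0)"
proof -
  have smooth: "smooth_fun \<psi>"
    using assms by (simp add: Cc_inf_iff)
  have "((\<lambda>r. x + r *\<^sub>R w) has_derivative (\<lambda>h. h *\<^sub>R w)) (at 0)"
    by (auto intro!: derivative_eq_intros)
  from has_derivative_compose[OF this smooth_fun_has_derivative[OF smooth, of "x + 0 *\<^sub>R w"]]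
  have "((\<lambda>r. \<psi> (x + r *\<^sub>R w)) has_derivative (\<lambda>h. Df \<psi> x w * h)) (at 0)"
    using linear_scale[OF has_derivative_linear[OF smooth_fun_has_derivative[OF smooth]]]
    by (simp add: o_def mult.commute)
  then have "((\<lambda>r. \<psi> (x + r *\<^sub>R w)) has_field_derivative Df \<psi> x w) (at 0)"
    by (simp add: has_field_derivative_def)
  then have "((\<lambda>r. (\<psi> (x + r *\<^sub>R w) - \<psi> x) / r) \<longlongrightarrow> Df \<psi> x w) (at 0)"
    by (simp add: has_field_derivative_iff)
  from tendsto_minus[OF this] show ?thesis
    by (simp add: minus_divide_left)
qed

lemma Cc_inf_difference_quotient_sq_tendsto:
  assumes "\<psi> \<in> Cc_inf" "\<And>i. X i \<noteq> 0" "X \<longlonglongrightarrow> 0"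
  shows "(\<lambda>i. ((\<psi> x - \<psi> (x + X i *\<^sub>R v)) / X i)\<^sup>2) \<longlonglongrightarrow> (Df \<psi> x v)\<^sup>2"
proof -
  have "((\<lambda>r. (\<psi> x - \<psi> (x + r *\<^sub>R v)) / r) \<circ> X) \<longlonglongrightarrow> - Df \<psi> x v"
    using Cc_inf_difference_quotient_tendsto[OF assms(1)] assms(2,3)
    unfolding tendsto_at_iff_sequentially by simp
  from tendsto_power[OF this, of 2] show ?thesis
    by (simp add: o_def)
qed

lemma Cc_inf_difference_quotient_le:
  assumes "\<psi> \<in> Cc_inf" "C \<ge> 0" "\<And>x v. \<bar>Df \<psi> x v\<bar> \<le> C * norm v"
    and R: "\<And>x. x \<in> tsupport \<psi> \<Longrightarrow> norm x \<le> R" and "norm v = 1" "\<bar>r\<bar> \<le> 1"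
  shows "((\<psi> x - \<psi> (x + r *\<^sub>R v)) / r)\<^sup>2 \<le> C\<^sup>2 * indicator (cball 0 (R + 1)) x"
proof (cases "norm x \<le> R + 1")
  case True
  have "\<bar>\<psi> x - \<psi> (x + r *\<^sub>R v)\<bar> \<le> C * \<bar>r\<bar>"
    using Cc_inf_lipschitz[OF assms(1-3), of x "x + r *\<^sub>R v"] assms(5) by simp
  then have "\<bar>(\<psi> x - \<psi> (x + r *\<^sub>R v)) / r\<bar> \<le> C"
    using assms(2) by (cases "r = 0") (simp_all add: divide_le_eq)
  then have "((\<psi> x - \<psi> (x + r *\<^sub>R v)) / r)\<^sup>2 \<le> C\<^sup>2"
    by (metis abs_ge_zero power2_abs power_mono)
  then show ?thesis
    using True by simp
next
  case False
  have "norm (x + r *\<^sub>R v) \<ge> norm x - \<bar>r\<bar>"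
    using norm_triangle_ineq2[of x "- (r *\<^sub>R v)"] assms(5) by simp
  then have "norm x > R" "norm (x + r *\<^sub>R v) > R"
    using False assms(6) by linarith+
  then have "x \<notin> tsupport \<psi>" "x + r *\<^sub>R v \<notin> tsupport \<psi>"
    using R by force+
  then show ?thesis
    by (simp add: not_in_tsupport)
qed

lemma Df_sq_le:
  assumes "\<And>x v. \<bar>Df \<psi> x v\<bar> \<le> C * norm v" and R: "\<And>x. x \<in> tsupport \<psi> \<Longrightarrow> norm x \<le> R"
    and "norm v = 1"
  shows "(Df \<psi> x v)\<^sup>2 \<le> C\<^sup>2 * indicator (cball 0 (R + 1)) x"
proof (cases "norm x \<le> R + 1")
  case True
  have "\<bar>Df \<psi> x v\<bar> \<le> C"
    using assms(1)[of x v] assms(3) by simp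
  then have "(Df \<psi> x v)\<^sup>2 \<le> C\<^sup>2"
    by (metis abs_ge_zero power2_abs power_mono)
  then show ?thesis
    using True by simp
next
  case False
  then have "x \<notin> tsupport \<psi>"
    using R by force
  then show ?thesis
    by (simp add: Df_outside_tsupport)
qed

lemma Cc_inf_square_integrable:
  assumes "\<psi> \<in> Cc_inf"
  shows "square_integrable \<psi>"
proof -
  have smooth: "smooth_fun \<psi>" and supp: "compact (tsupport \<psi>)"
    using assms by (simp_all add: Cc_inf_iff)
  obtain B where B: "\<And>x. \<bar>\<psi> x\<bar> \<le> B"
    using continuous_compact_tsupport_bounded[OF smooth_fun_continuous_on[OF smooth] supp] by metis
  have "L2_norm_sq lborel \<psi> \<le> (\<integral>\<^sup>+x. ennreal (B\<^sup>2) * indicator (tsupport \<psi>) x \<partial>lborel)"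
    unfolding L2_norm_sq_def
  proof (rule nn_integral_mono)
    fix x
    have "(\<psi> x)\<^sup>2 \<le> B\<^sup>2"
      using B by (metis abs_ge_zero power2_abs power_mono)
    then show "ennreal ((\<psi> x)\<^sup>2) \<le> ennreal (B\<^sup>2) * indicator (tsupport \<psi>) x"
      using not_in_tsupport[of x \<psi>] by (cases "x \<in> tsupport \<psi>") (auto intro: ennreal_leI)
  qed
  also have "\<dots> = ennreal (B\<^sup>2) * emeasure lborel (tsupport \<psi>)"
    by (simp add: nn_integral_cmult_indicator borel_closed closed_tsupport)
  also have "\<dots> < \<infinity>"
    using emeasure_compact_finite[OF supp] by (simp add: ennreal_mult_less_top)
  finally show ?thesis
    using smooth_fun_continuous_on[OF smooth]
    by (simp add: square_integrable_def borel_measurable_continuous_onI)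
qed

section \<open>Increments along directions of the sphere\<close>

locale sphere_measure = finite_measure a
  for a :: "'a::euclidean_space measure" +
  assumes sets_eq_sphere: "sets a = sets (restrict_space borel (sphere (0::'a) 1))"
begin

lemma space_eq_sphere: "space a = sphere 0 1"
  using sets_eq_imp_space_eq[OF sets_eq_sphere] by (simp add: space_restrict_space)

sublocale pair: pair_sigma_finite lborel a
  by (intro pair_sigma_finite.intro lborel.sigma_finite_measure_axioms sigma_finite_measure_axioms)

abbreviation M :: "('a \<times> 'a) measure" where
  "M \<equiv> lborel \<Otimes>\<^sub>M a"

lemma space_M: "space M = UNIV \<times> sphere 0 1"
  by (simp add: space_pair_measure space_eq_sphere)

lemma measurable_ident_sphere [measurable]: "(\<lambda>x. x) \<in> measurable a borel"
proof -
  have "(\<lambda>x. x) \<in> measurable (restrict_space borel (sphere (0::'a) 1)) borel"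
    by (intro measurable_restrict_space1) simp
  then show ?thesis
    using measurable_cong_sets[OF sets_eq_sphere refl] by blast
qed

lemma measurable_snd_sphere [measurable]: "snd \<in> measurable (N \<Otimes>\<^sub>M a) borel"
  using measurable_compose[OF measurable_snd measurable_ident_sphere] by (simp add: comp_def)

lemma measurable_fst_lborel [measurable]: "fst \<in> measurable M borel"
  using measurable_fst[of lborel a] by (simp add: measurable_lborel1)

lemma nn_integral_shear:
  fixes h :: "'a \<times> 'a \<Rightarrow> ennreal"
  assumes [measurable]: "h \<in> borel_measurable M"
  shows "(\<integral>\<^sup>+p. h (fst p + c *\<^sub>R snd p, snd p) \<partial>M) = integral\<^sup>N M h"
proof -
  have "(\<lambda>p. (fst p + c *\<^sub>R snd p, snd p)) \<in> measurable M M"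
    by (intro measurable_Pair) (auto simp: measurable_lborel2 intro: measurable_snd)
  then have [measurable]: "(\<lambda>p. h (fst p + c *\<^sub>R snd p, snd p)) \<in> borel_measurable M"
    by (rule measurable_compose) simp
  have "(\<integral>\<^sup>+p. h (fst p + c *\<^sub>R snd p, snd p) \<partial>M) = (\<integral>\<^sup>+y. (\<integral>\<^sup>+x. h (x + c *\<^sub>R y, y) \<partial>lborel) \<partial>a)"
    by (simp add: pair.nn_integral_snd[symmetric])
  also have "\<dots> = (\<integral>\<^sup>+y. (\<integral>\<^sup>+x. h (x, y) \<partial>lborel) \<partial>a)"
  proof (rule nn_integral_cong)
    fix y
    assume "y \<in> space a"
    then have "(\<lambda>x. h (x, y)) \<in> borel_measurable borel"
      using measurable_Pair1[OF assms] by (simp add: measurable_lborel1)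
    then show "(\<integral>\<^sup>+x. h (x + c *\<^sub>R y, y) \<partial>lborel) = (\<integral>\<^sup>+x. h (x, y) \<partial>lborel)"
      by (rule nn_integral_lborel_translate)
  qed
  also have "\<dots> = integral\<^sup>N M h"
    by (simp add: pair.nn_integral_snd[symmetric])
  finally show ?thesis .
qed

definition incr_sq :: "('a \<Rightarrow> real) \<Rightarrow> real \<Rightarrow> ennreal" where
  "incr_sq g r = L2_norm_sq M (\<lambda>p. g (fst p) - g (fst p + r *\<^sub>R snd p))"

definition incr :: "('a \<Rightarrow> real) \<Rightarrow> real \<Rightarrow> real" where
  "incr g r = sqrt (enn2real (incr_sq g r))"

lemma incr_nonneg: "incr g r \<ge> 0"
  by (simp add: incr_def)

lemma incr_zero [simp]: "incr g 0 = 0"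
  by (simp add: incr_def incr_sq_def L2_norm_sq_def)

lemma incr_uminus [simp]: "incr (\<lambda>x. - g x) r = incr g r"
proof -
  have "(\<lambda>p. - g (fst p) - - g (fst p + r *\<^sub>R snd p)) = (\<lambda>p. - (g (fst p) - g (fst p + r *\<^sub>R snd p)))"
    by simp
  then show ?thesis
    unfolding incr_def incr_sq_def by (metis L2_norm_sq_uminus)
qed

lemma L2_norm_sq_fst:
  assumes [measurable]: "g \<in> borel_measurable borel"
  shows "L2_norm_sq M (\<lambda>p. g (fst p)) = L2_norm_sq lborel g * emeasure a (space a)"
proof -
  have "(\<lambda>p. ennreal ((g (fst p))\<^sup>2)) \<in> borel_measurable M"
    by measurable
  from nn_integral_fst[OF this]
  have "L2_norm_sq M (\<lambda>p. g (fst p)) = (\<integral>\<^sup>+x. \<integral>\<^sup>+y. ennreal ((g x)\<^sup>2) \<partial>a \<partial>lborel)"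
    by (simp add: L2_norm_sq_def)
  also have "\<dots> = L2_norm_sq lborel g * emeasure a (space a)"
    unfolding L2_norm_sq_def by (simp add: nn_integral_multc measurable_lborel1)
  finally show ?thesis .
qed

lemma L2_norm_sq_shift:
  assumes [measurable]: "g \<in> borel_measurable borel"
  shows "L2_norm_sq M (\<lambda>p. g (fst p + r *\<^sub>R snd p)) = L2_norm_sq lborel g * emeasure a (space a)"
proof -
  have "L2_norm_sq M (\<lambda>p. g (fst p + r *\<^sub>R snd p))
      = (\<integral>\<^sup>+p. (\<lambda>q. ennreal ((g (fst q))\<^sup>2)) (fst p + r *\<^sub>R snd p, snd p) \<partial>M)"
    by (simp add: L2_norm_sq_def)
  also have "\<dots> = L2_norm_sq M (\<lambda>p. g (fst p))"
    unfolding L2_norm_sq_def by (rule nn_integral_shear) simp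
  finally show ?thesis
    using L2_norm_sq_fst[OF assms] by simp
qed

lemma square_integrable_incr:
  assumes "square_integrable g"
  shows "incr_sq g r < \<infinity>"
    and "incr g r \<le> 2 * sqrt (measure a (space a) * enn2real (L2_norm_sq lborel g))"
proof -
  have [measurable]: "g \<in> borel_measurable borel" and fin: "L2_norm_sq lborel g < \<infinity>"
    using assms by (auto simp: square_integrable_def)
  have parts: "L2_norm_sq M (\<lambda>p. g (fst p)) = ennreal (measure a (space a) * enn2real (L2_norm_sq lborel g))"
    "L2_norm_sq M (\<lambda>p. - g (fst p + r *\<^sub>R snd p)) = ennreal (measure a (space a) * enn2real (L2_norm_sq lborel g))"
    using fin by (simp_all add: L2_norm_sq_fst L2_norm_sq_shift emeasure_eq_measure ennreal_mult mult.commute)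
  note triangle = L2_norm_sq_add[of "\<lambda>p. g (fst p)" M "\<lambda>p. - g (fst p + r *\<^sub>R snd p)", unfolded parts]
  show "incr_sq g r < \<infinity>"
    using triangle(1) by (simp add: incr_sq_def)
  show "incr g r \<le> 2 * sqrt (measure a (space a) * enn2real (L2_norm_sq lborel g))"
    using triangle(2) by (simp add: incr_def incr_sq_def)
qed

lemma incr_add:
  assumes "square_integrable g\<^sub>1" "square_integrable g\<^sub>2"
  shows "incr (\<lambda>x. g\<^sub>1 x + g\<^sub>2 x) r \<le> incr g\<^sub>1 r + incr g\<^sub>2 r"
proof -
  have [measurable]: "g\<^sub>1 \<in> borel_measurable borel" "g\<^sub>2 \<in> borel_measurable borel"
    using assms by (auto simp: square_integrable_def)
  have "(\<lambda>p. (g\<^sub>1 (fst p) - g\<^sub>1 (fst p + r *\<^sub>R snd p)) + (g\<^sub>2 (fst p) - g\<^sub>2 (fst p + r *\<^sub>R snd p)))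
     = (\<lambda>p. (g\<^sub>1 (fst p) + g\<^sub>2 (fst p)) - (g\<^sub>1 (fst p + r *\<^sub>R snd p) + g\<^sub>2 (fst p + r *\<^sub>R snd p)))"
    by (simp add: algebra_simps)
  then show ?thesis
    using L2_norm_sq_add(2)[OF _ _ square_integrable_incr(1)[OF assms(1), of r, unfolded incr_sq_def]
        square_integrable_incr(1)[OF assms(2), of r, unfolded incr_sq_def]]
    by (simp add: incr_def incr_sq_def)
qed

lemma incr_diff_abs:
  assumes "square_integrable g\<^sub>1" "square_integrable g\<^sub>2"
  shows "\<bar>incr g\<^sub>1 r - incr g\<^sub>2 r\<bar> \<le> incr (\<lambda>x. g\<^sub>1 x - g\<^sub>2 x) r"
proof -
  have "incr g\<^sub>1 r \<le> incr (\<lambda>x. g\<^sub>1 x - g\<^sub>2 x) r + incr g\<^sub>2 r"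
    using incr_add[OF square_integrable_diff[OF assms] assms(2), of r] by simp
  moreover have "incr g\<^sub>2 r \<le> incr (\<lambda>x. g\<^sub>2 x - g\<^sub>1 x) r + incr g\<^sub>1 r"
    using incr_add[OF square_integrable_diff[OF assms(2,1)] assms(1), of r] by simp
  moreover have "incr (\<lambda>x. g\<^sub>2 x - g\<^sub>1 x) r = incr (\<lambda>x. g\<^sub>1 x - g\<^sub>2 x) r"
    using incr_uminus[of "\<lambda>x. g\<^sub>1 x - g\<^sub>2 x" r] by simp
  ultimately show ?thesis
    by linarith
qed

lemma incr_add_step:
  assumes "square_integrable g"
  shows "incr g (r\<^sub>1 + r\<^sub>2) \<le> incr g r\<^sub>1 + incr g r\<^sub>2"
proof -
  have [measurable]: "g \<in> borel_measurable borel"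
    using assms by (auto simp: square_integrable_def)
  have shifted: "L2_norm_sq M (\<lambda>p. g (fst p + r\<^sub>1 *\<^sub>R snd p) - g (fst p + r\<^sub>1 *\<^sub>R snd p + r\<^sub>2 *\<^sub>R snd p))
      = incr_sq g r\<^sub>2"
    using nn_integral_shear[of "\<lambda>q. ennreal ((g (fst q) - g (fst q + r\<^sub>2 *\<^sub>R snd q))\<^sup>2)" r\<^sub>1]
    by (simp add: incr_sq_def L2_norm_sq_def)
  have "(\<lambda>p. (g (fst p) - g (fst p + r\<^sub>1 *\<^sub>R snd p))
        + (g (fst p + r\<^sub>1 *\<^sub>R snd p) - g (fst p + r\<^sub>1 *\<^sub>R snd p + r\<^sub>2 *\<^sub>R snd p)))
     = (\<lambda>p. g (fst p) - g (fst p + (r\<^sub>1 + r\<^sub>2) *\<^sub>R snd p))"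
    by (simp add: algebra_simps scaleR_add_left)
  then show ?thesis
    using L2_norm_sq_add(2)[OF _ _ square_integrable_incr(1)[OF assms, of r\<^sub>1, unfolded incr_sq_def]
        square_integrable_incr(1)[OF assms, of r\<^sub>2, folded shifted]]
    by (simp add: incr_def incr_sq_def shifted)
qed

lemma incr_mult:
  assumes "square_integrable g"
  shows "incr g (real n * r) \<le> real n * incr g r"
proof (induction n)
  case (Suc n)
  have "incr g (real (Suc n) * r) = incr g (real n * r + r)"
    by (simp add: algebra_simps)
  also have "\<dots> \<le> incr g (real n * r) + incr g r"
    by (rule incr_add_step[OF assms])
  also have "\<dots> \<le> real (Suc n) * incr g r"
    using Suc by (simp add: algebra_simps)
  finally show ?case .
qed simp

text \<open>Subadditivity in r turns the limit of incr g r / |r| at 0 into a bound at every r.\<close>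

lemma incr_le_of_tendsto:
  assumes g: "square_integrable g" and lim: "((\<lambda>r. incr g r / \<bar>r\<bar>) \<longlongrightarrow> l) (at 0)"
  shows "incr g r \<le> \<bar>r\<bar> * l"
proof (cases "r = 0")
  case False
  define X where "X n = r / real (Suc n)" for n
  have "X \<longlonglongrightarrow> 0"
    unfolding X_def using tendsto_mult[OF tendsto_const[of r] LIMSEQ_inverse_real_of_nat]
    by (simp add: divide_inverse)
  moreover have "X n \<noteq> 0" for n
    using False by (simp add: X_def)
  ultimately have "((\<lambda>r. incr g r / \<bar>r\<bar>) \<circ> X) \<longlonglongrightarrow> l"
    using lim unfolding tendsto_at_iff_sequentially by simp
  then have "(\<lambda>n. real (Suc n) * incr g (X n)) \<longlonglongrightarrow> \<bar>r\<bar> * l"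
    using False by (intro Lim_transform_eventually[OF tendsto_mult[OF tendsto_const]]) (auto simp: X_def)
  moreover have "incr g r \<le> real (Suc n) * incr g (X n)" for n
    using incr_mult[OF g, of "Suc n" "X n"] by (simp add: X_def)
  ultimately show ?thesis
    by (intro LIMSEQ_le_const) auto
qed simp

end

definition H1a_seminorm :: "'a::euclidean_space measure \<Rightarrow> ('a \<Rightarrow> real) \<Rightarrow> real" where
  "H1a_seminorm a \<psi> = sqrt (enn2real (H1a_sq_smooth a \<psi>))"

lemma H1a_seminorm_nonneg: "H1a_seminorm a \<psi> \<ge> 0"
  by (simp add: H1a_seminorm_def)

context sphere_measure
begin

lemma Cc_inf_incr_dominated:
  assumes "\<psi> \<in> Cc_inf"
  obtains w where "integrable M w"
    "\<And>p r. p \<in> space M \<Longrightarrow> \<bar>r\<bar> \<le> 1 \<Longrightarrow> ((\<psi> (fst p) - \<psi> (fst p + r *\<^sub>R snd p)) / r)\<^sup>2 \<le> w p"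
    "\<And>p. p \<in> space M \<Longrightarrow> (Df \<psi> (fst p) (snd p))\<^sup>2 \<le> w p"
proof -
  obtain C where C: "C \<ge> 0" "\<And>x v. \<bar>Df \<psi> x v\<bar> \<le> C * norm v"
    using Cc_inf_Df_bounded[OF assms] by blast
  have "bounded (tsupport \<psi>)"
    using assms by (simp add: Cc_inf_iff compact_imp_bounded)
  then obtain R where R: "\<And>x. x \<in> tsupport \<psi> \<Longrightarrow> norm x \<le> R"
    by (auto simp: bounded_iff)
  define A where "A = cball (0::'a) (R + 1) \<times> space a"
  have "emeasure M A = emeasure lborel (cball (0::'a) (R + 1)) * emeasure a (space a)"
    unfolding A_def by (rule emeasure_pair_measure_Times) auto
  also have "\<dots> < \<infinity>"
  proof -
    have "emeasure a (space a) < \<infinity>"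
      by (simp add: less_top[symmetric])
    then show ?thesis
      using emeasure_lborel_cball_finite[of "0::'a" "R + 1"] by (simp add: ennreal_mult_less_top)
  qed
  finally have "integrable M (\<lambda>p. C\<^sup>2 * indicator A p)"
    unfolding A_def by (intro integrable_mult_right integrable_real_indicator) auto
  moreover have ind: "indicator A p = indicator (cball 0 (R + 1)) (fst p)" if "p \<in> space M" for p
    using that by (cases p) (simp add: A_def space_M space_eq_sphere indicator_def)
  moreover have unit: "norm (snd p) = 1" if "p \<in> space M" for p
    using that by (cases p) (simp add: space_M)
  ultimately show ?thesis
    using Cc_inf_difference_quotient_le[OF assms C R unit] Df_sq_le[OF C(2) R unit]
    by (intro that[of "\<lambda>p. C\<^sup>2 * indicator A p"]) (simp_all add: ind)
qed

lemma Cc_inf_measurable_Df_sq: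
  assumes "\<psi> \<in> Cc_inf"
  shows "(\<lambda>p. (Df \<psi> (fst p) (snd p))\<^sup>2) \<in> borel_measurable M"
proof (rule borel_measurable_LIMSEQ_real)
  define X where "X i = 1 / real (Suc i)" for i
  have [measurable]: "\<psi> \<in> borel_measurable borel"
    using Cc_inf_square_integrable[OF assms] by (simp add: square_integrable_def)
  show "(\<lambda>i. ((\<psi> (fst p) - \<psi> (fst p + X i *\<^sub>R snd p)) / X i)\<^sup>2) \<longlonglongrightarrow> (Df \<psi> (fst p) (snd p))\<^sup>2" for p
    unfolding X_def by (rule Cc_inf_difference_quotient_sq_tendsto[OF assms _ LIMSEQ_Suc[OF lim_1_over_n]]) simp
  show "(\<lambda>p. ((\<psi> (fst p) - \<psi> (fst p + X i *\<^sub>R snd p)) / X i)\<^sup>2) \<in> borel_measurable M" for i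
    by measurable
qed

lemma Cc_inf_integrable_Df_sq:
  assumes "\<psi> \<in> Cc_inf"
  shows "integrable M (\<lambda>p. (Df \<psi> (fst p) (snd p))\<^sup>2)"
proof -
  obtain w where "integrable M w" and w: "\<And>p. p \<in> space M \<Longrightarrow> (Df \<psi> (fst p) (snd p))\<^sup>2 \<le> w p"
    using Cc_inf_incr_dominated[OF assms] by metis
  moreover have "AE p in M. norm ((Df \<psi> (fst p) (snd p))\<^sup>2) \<le> norm (w p)"
    by (rule AE_I2) (use w[THEN order_trans[OF zero_le_power2]] w in simp)
  ultimately show ?thesis
    by (intro Bochner_Integration.integrable_bound[OF _ Cc_inf_measurable_Df_sq[OF assms]])
qed

lemma Cc_inf_incr_sq_tendsto:
  assumes "\<psi> \<in> Cc_inf"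
  shows "((\<lambda>r. enn2real (incr_sq \<psi> r) / r\<^sup>2) \<longlongrightarrow> (\<integral>p. (Df \<psi> (fst p) (snd p))\<^sup>2 \<partial>M)) (at 0)"
proof -
  define F where "F r p = ((\<psi> (fst p) - \<psi> (fst p + r *\<^sub>R snd p)) / r)\<^sup>2" for r p
  obtain w where w: "integrable M w" "\<And>p r. p \<in> space M \<Longrightarrow> \<bar>r\<bar> \<le> 1 \<Longrightarrow> F r p \<le> w p"
    using Cc_inf_incr_dominated[OF assms] unfolding F_def by metis
  have [measurable]: "\<psi> \<in> borel_measurable borel"
    using Cc_inf_square_integrable[OF assms] by (simp add: square_integrable_def)
  have "((\<lambda>r. integral\<^sup>L M (F r)) \<longlongrightarrow> (\<integral>p. (Df \<psi> (fst p) (snd p))\<^sup>2 \<partial>M)) (at 0 within ball 0 1)"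
    unfolding tendsto_at_iff_sequentially
  proof (intro allI impI)
    fix X :: "nat \<Rightarrow> real"
    assume X_ball: "\<forall>i. X i \<in> ball 0 1 - {0}" and "X \<longlonglongrightarrow> 0"
    have X: "\<bar>X i\<bar> \<le> 1" "X i \<noteq> 0" for i
      using X_ball[rule_format, of i] by (auto simp: dist_real_def)
    have "(\<lambda>i. integral\<^sup>L M (F (X i))) \<longlonglongrightarrow> (\<integral>p. (Df \<psi> (fst p) (snd p))\<^sup>2 \<partial>M)"
    proof (rule integral_dominated_convergence[OF Cc_inf_measurable_Df_sq[OF assms] _ w(1)])
      show "F (X i) \<in> borel_measurable M" for i
        unfolding F_def by measurable
      show "AE p in M. (\<lambda>i. F (X i) p) \<longlonglongrightarrow> (Df \<psi> (fst p) (snd p))\<^sup>2"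
        unfolding F_def using X \<open>X \<longlonglongrightarrow> 0\<close>
        by (intro AE_I2 Cc_inf_difference_quotient_sq_tendsto[OF assms])
      show "AE p in M. norm (F (X i) p) \<le> w p" for i
        using w(2)[OF _ X(1)] by (intro AE_I2) (simp add: F_def)
    qed
    then show "((\<lambda>r. integral\<^sup>L M (F r)) \<circ> X) \<longlonglongrightarrow> (\<integral>p. (Df \<psi> (fst p) (snd p))\<^sup>2 \<partial>M)"
      by (simp add: o_def)
  qed
  moreover have "at (0::real) within ball 0 1 = at 0"
    by (rule at_within_open) auto
  moreover have "enn2real (incr_sq \<psi> r) / r\<^sup>2 = integral\<^sup>L M (F r)" for r
  proof -
    have "enn2real (incr_sq \<psi> r) = (\<integral>p. (\<psi> (fst p) - \<psi> (fst p + r *\<^sub>R snd p))\<^sup>2 \<partial>M)"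
      unfolding incr_sq_def L2_norm_sq_def by (rule integral_eq_nn_integral[symmetric]) auto
    moreover have "F r = (\<lambda>p. (\<psi> (fst p) - \<psi> (fst p + r *\<^sub>R snd p))\<^sup>2 / r\<^sup>2)"
      by (rule ext) (simp add: F_def power_divide)
    ultimately show ?thesis
      by simp
  qed
  ultimately show ?thesis
    by simp
qed

lemma H1a_sq_smooth_eq_integral:
  assumes "\<psi> \<in> Cc_inf"
  shows "H1a_sq_smooth a \<psi> = ennreal (\<integral>p. (Df \<psi> (fst p) (snd p))\<^sup>2 \<partial>M)"
proof -
  note int = Cc_inf_integrable_Df_sq[OF assms]
  have [measurable]: "(\<lambda>p. (Df \<psi> (fst p) (snd p))\<^sup>2) \<in> borel_measurable M"
    using int by (rule borel_measurable_integrable)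
  have "(\<lambda>p. ennreal ((Df \<psi> (fst p) (snd p))\<^sup>2)) \<in> borel_measurable M"
    by measurable
  from nn_integral_fst[OF this]
  have "H1a_sq_smooth a \<psi> = (\<integral>\<^sup>+p. ennreal ((Df \<psi> (fst p) (snd p))\<^sup>2) \<partial>M)"
    by (simp add: H1a_sq_smooth_def)
  also have "\<dots> = ennreal (\<integral>p. (Df \<psi> (fst p) (snd p))\<^sup>2 \<partial>M)"
    by (rule nn_integral_eq_integral[OF int]) simp
  finally show ?thesis .
qed

lemma Cc_inf_H1a_sq_smooth: "\<psi> \<in> Cc_inf \<Longrightarrow> H1a_sq_smooth a \<psi> = ennreal ((H1a_seminorm a \<psi>)\<^sup>2)"
  by (simp add: H1a_seminorm_def H1a_sq_smooth_eq_integral)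

lemma Cc_inf_incr_tendsto:
  assumes "\<psi> \<in> Cc_inf"
  shows "((\<lambda>r. incr \<psi> r / \<bar>r\<bar>) \<longlongrightarrow> H1a_seminorm a \<psi>) (at 0)"
proof -
  have "(\<lambda>r. incr \<psi> r / \<bar>r\<bar>) = (\<lambda>r. sqrt (enn2real (incr_sq \<psi> r) / r\<^sup>2))"
    by (simp add: incr_def real_sqrt_divide)
  moreover have "enn2real (H1a_sq_smooth a \<psi>) = (\<integral>p. (Df \<psi> (fst p) (snd p))\<^sup>2 \<partial>M)"
    by (simp add: H1a_sq_smooth_eq_integral[OF assms])
  ultimately show ?thesis
    using tendsto_real_sqrt[OF Cc_inf_incr_sq_tendsto[OF assms]] by (simp add: H1a_seminorm_def)
qed

lemma Cc_inf_incr_le: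
  assumes "\<psi> \<in> Cc_inf"
  shows "incr \<psi> r \<le> \<bar>r\<bar> * H1a_seminorm a \<psi>"
  by (rule incr_le_of_tendsto[OF Cc_inf_square_integrable[OF assms] Cc_inf_incr_tendsto[OF assms]])

end

section \<open>Density of smooth functions in \<open>H\<^sup>1\<^sub>a\<^sub>,\<^sub>0\<close>\<close>

context sphere_measure
begin

context
  fixes u :: "'a \<Rightarrow> real" and \<phi> :: "nat \<Rightarrow> 'a \<Rightarrow> real"
  assumes u_meas: "u \<in> borel_measurable lborel" and approx: "H1a0_approx a u \<phi>"
begin

lemma approx_Cc_inf: "\<phi> k \<in> Cc_inf"
  using approx by (simp add: H1a0_approx_def)

lemma approx_L2_tendsto: "(\<lambda>k. L2_norm_sq lborel (\<lambda>x. u x - \<phi> k x)) \<longlonglongrightarrow> 0"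
  using approx by (simp add: H1a0_approx_def L2_dist_sq_def L2_norm_sq_def power2_commute)

lemma approx_square_integrable: "square_integrable u"
proof -
  obtain k where "L2_norm_sq lborel (\<lambda>x. u x - \<phi> k x) < 1"
    using order_tendstoD(2)[OF approx_L2_tendsto zero_less_one] by (auto dest: eventually_happens)
  moreover have "\<phi> k \<in> borel_measurable borel"
    using Cc_inf_square_integrable[OF approx_Cc_inf] by (simp add: square_integrable_def)
  ultimately have "square_integrable (\<lambda>x. u x - \<phi> k x)"
    using u_meas by (auto simp: square_integrable_def measurable_lborel1 intro: order.strict_trans)
  from square_integrable_add[OF this Cc_inf_square_integrable[OF approx_Cc_inf[of k]]]
  show ?thesis
    by simp
qed

lemma approx_Cauchy: "e > 0 \<Longrightarrow> \<exists>N. \<forall>m\<ge>N. \<forall>k\<ge>N. H1a_seminorm a (\<lambda>x. \<phi> m x - \<phi> k x) < e"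
proof -
  assume "e > 0"
  then obtain N where N: "\<And>m k. m \<ge> N \<Longrightarrow> k \<ge> N \<Longrightarrow>
      H1a_sq_smooth a (\<lambda>x. \<phi> m x - \<phi> k x) + L2_dist_sq (\<phi> m) (\<phi> k) < ennreal (e\<^sup>2)"
    using approx unfolding H1a0_approx_def by (meson zero_less_power)
  have "H1a_seminorm a (\<lambda>x. \<phi> m x - \<phi> k x) < e" if "m \<ge> N" "k \<ge> N" for m k
  proof -
    have "ennreal ((H1a_seminorm a (\<lambda>x. \<phi> m x - \<phi> k x))\<^sup>2) < ennreal (e\<^sup>2)"
      using N[OF that] Cc_inf_H1a_sq_smooth[OF Cc_inf_diff[OF approx_Cc_inf approx_Cc_inf]]
      by (metis add_increasing2 le_less_trans order_refl zero_le)
    then show ?thesis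
      using \<open>e > 0\<close> by (simp add: ennreal_less_iff power_less_imp_less_base)
  qed
  then show ?thesis
    by blast
qed

lemma incr_approx_error:
  assumes "\<And>m k. m \<ge> N \<Longrightarrow> k \<ge> N \<Longrightarrow> H1a_seminorm a (\<lambda>x. \<phi> m x - \<phi> k x) < e" and "k \<ge> N"
  shows "incr (\<lambda>x. u x - \<phi> k x) r \<le> \<bar>r\<bar> * e"
proof -
  define d where "d m = 2 * sqrt (measure a (space a) * enn2real (L2_norm_sq lborel (\<lambda>x. u x - \<phi> m x)))" for m
  have "d \<longlonglongrightarrow> 2 * sqrt (measure a (space a) * enn2real 0)"
    unfolding d_def by (intro tendsto_intros tendsto_enn2real) (simp_all add: approx_L2_tendsto)
  then have "(\<lambda>m. d m + \<bar>r\<bar> * e) \<longlonglongrightarrow> 0 + \<bar>r\<bar> * e"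
    by (intro tendsto_add tendsto_const) simp
  moreover have "incr (\<lambda>x. u x - \<phi> k x) r \<le> d m + \<bar>r\<bar> * e" if "m \<ge> N" for m
  proof -
    have u_m: "square_integrable (\<lambda>x. u x - \<phi> m x)"
      by (intro square_integrable_diff approx_square_integrable Cc_inf_square_integrable approx_Cc_inf)
    have m_k: "square_integrable (\<lambda>x. \<phi> m x - \<phi> k x)"
      by (intro square_integrable_diff Cc_inf_square_integrable approx_Cc_inf)
    have "incr (\<lambda>x. (u x - \<phi> m x) + (\<phi> m x - \<phi> k x)) r \<le> incr (\<lambda>x. u x - \<phi> m x) r + incr (\<lambda>x. \<phi> m x - \<phi> k x) r"
      by (rule incr_add[OF u_m m_k])
    also have "incr (\<lambda>x. u x - \<phi> m x) r \<le> d m"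
      unfolding d_def by (rule square_integrable_incr(2)[OF u_m])
    also have "incr (\<lambda>x. \<phi> m x - \<phi> k x) r \<le> \<bar>r\<bar> * H1a_seminorm a (\<lambda>x. \<phi> m x - \<phi> k x)"
      by (rule Cc_inf_incr_le[OF Cc_inf_diff[OF approx_Cc_inf approx_Cc_inf]])
    also have "\<dots> \<le> \<bar>r\<bar> * e"
      using assms(1)[OF that assms(2)] by (simp add: mult_left_mono)
    finally show ?thesis
      by simp
  qed
  ultimately show ?thesis
    by (intro LIMSEQ_le_const) auto
qed

lemma approx_seminorm_diff: "\<bar>H1a_seminorm a (\<phi> m) - H1a_seminorm a (\<phi> k)\<bar> \<le> H1a_seminorm a (\<lambda>x. \<phi> m x - \<phi> k x)"
proof (rule tendsto_le[OF _ tendsto_const])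
  show "((\<lambda>r. \<bar>incr (\<phi> m) r / \<bar>r\<bar> - incr (\<phi> k) r / \<bar>r\<bar>\<bar>)
      \<longlongrightarrow> \<bar>H1a_seminorm a (\<phi> m) - H1a_seminorm a (\<phi> k)\<bar>) (at 0)"
    by (intro tendsto_intros Cc_inf_incr_tendsto approx_Cc_inf)
  have "\<bar>incr (\<phi> m) r / \<bar>r\<bar> - incr (\<phi> k) r / \<bar>r\<bar>\<bar> \<le> H1a_seminorm a (\<lambda>x. \<phi> m x - \<phi> k x)"
    if "r \<noteq> 0" for r
  proof -
    have "\<bar>incr (\<phi> m) r - incr (\<phi> k) r\<bar> \<le> incr (\<lambda>x. \<phi> m x - \<phi> k x) r"
      by (intro incr_diff_abs Cc_inf_square_integrable approx_Cc_inf)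
    also have "\<dots> \<le> \<bar>r\<bar> * H1a_seminorm a (\<lambda>x. \<phi> m x - \<phi> k x)"
      by (rule Cc_inf_incr_le[OF Cc_inf_diff[OF approx_Cc_inf approx_Cc_inf]])
    finally show ?thesis
      using that by (simp add: diff_divide_distrib[symmetric] abs_divide divide_le_eq mult.commute)
  qed
  then show "\<forall>\<^sub>F r in at 0. \<bar>incr (\<phi> m) r / \<bar>r\<bar> - incr (\<phi> k) r / \<bar>r\<bar>\<bar> \<le> H1a_seminorm a (\<lambda>x. \<phi> m x - \<phi> k x)"
    by (auto simp: eventually_at_filter)
qed simp

lemma approx_seminorm_convergent: "convergent (\<lambda>k. H1a_seminorm a (\<phi> k))"
proof (rule Cauchy_convergent, rule metric_CauchyI)
  fix e :: real
  assume "e > 0"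
  then obtain N where N: "\<forall>m\<ge>N. \<forall>k\<ge>N. H1a_seminorm a (\<lambda>x. \<phi> m x - \<phi> k x) < e"
    using approx_Cauchy by blast
  have "dist (H1a_seminorm a (\<phi> m)) (H1a_seminorm a (\<phi> k)) < e" if "m \<ge> N" "k \<ge> N" for m k
    using le_less_trans[OF approx_seminorm_diff[of m k]] N that by (simp add: dist_real_def)
  then show "\<exists>M. \<forall>m\<ge>M. \<forall>n\<ge>M. dist (H1a_seminorm a (\<phi> m)) (H1a_seminorm a (\<phi> n)) < e"
    by blast
qed

lemma approx_incr_tendsto:
  "((\<lambda>r. incr u r / \<bar>r\<bar>) \<longlongrightarrow> lim (\<lambda>k. H1a_seminorm a (\<phi> k))) (at 0)"
proof (rule tendstoI)
  fix e :: real
  assume "e > 0"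
  define l where "l = lim (\<lambda>k. H1a_seminorm a (\<phi> k))"
  obtain N where N: "\<And>m k. m \<ge> N \<Longrightarrow> k \<ge> N \<Longrightarrow> H1a_seminorm a (\<lambda>x. \<phi> m x - \<phi> k x) < e / 4"
    using approx_Cauchy[of "e / 4"] \<open>e > 0\<close> by auto
  have "(\<lambda>k. H1a_seminorm a (\<phi> k)) \<longlonglongrightarrow> l"
    using approx_seminorm_convergent unfolding l_def by (simp add: convergent_LIMSEQ_iff)
  then have "\<forall>\<^sub>F k in sequentially. dist (H1a_seminorm a (\<phi> k)) l < e / 4"
    by (rule tendstoD) (use \<open>e > 0\<close> in simp)
  then obtain N' where N': "\<And>k. k \<ge> N' \<Longrightarrow> dist (H1a_seminorm a (\<phi> k)) l < e / 4"
    by (auto simp: eventually_sequentially)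
  define k where "k = max N N'"
  have k: "k \<ge> N" "dist (H1a_seminorm a (\<phi> k)) l < e / 4"
    using N' by (simp_all add: k_def)
  have "\<forall>\<^sub>F r in at 0. dist (incr (\<phi> k) r / \<bar>r\<bar>) (H1a_seminorm a (\<phi> k)) < e / 4"
    using tendstoD[OF Cc_inf_incr_tendsto[OF approx_Cc_inf[of k]], of "e / 4"] \<open>e > 0\<close> by simp
  moreover have "\<forall>\<^sub>F r in at (0::real). r \<noteq> 0"
    by (simp add: eventually_at_filter)
  ultimately show "\<forall>\<^sub>F r in at 0. dist (incr u r / \<bar>r\<bar>) l < e"
  proof eventually_elim
    case (elim r)
    have "\<bar>incr u r - incr (\<phi> k) r\<bar> \<le> incr (\<lambda>x. u x - \<phi> k x) r"
      by (intro incr_diff_abs approx_square_integrable Cc_inf_square_integrable approx_Cc_inf)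
    also have "\<dots> \<le> \<bar>r\<bar> * (e / 4)"
      using N k(1) by (rule incr_approx_error)
    finally have "\<bar>incr u r / \<bar>r\<bar> - incr (\<phi> k) r / \<bar>r\<bar>\<bar> \<le> e / 4"
      using elim by (simp add: diff_divide_distrib[symmetric] abs_divide divide_le_eq mult.commute)
    then show ?case
      using elim k(2) unfolding dist_real_def by linarith
  qed
qed

lemma approx_H1a_sq_smooth_tendsto:
  "(\<lambda>k. H1a_sq_smooth a (\<phi> k)) \<longlonglongrightarrow> ennreal ((lim (\<lambda>k. H1a_seminorm a (\<phi> k)))\<^sup>2)"
  unfolding Cc_inf_H1a_sq_smooth[OF approx_Cc_inf]
  using approx_seminorm_convergent
  by (intro tendsto_ennrealI tendsto_power) (simp add: convergent_LIMSEQ_iff)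

end

lemma H1a0_incr_tendsto:
  assumes "u \<in> H1a0 a"
  obtains l where "l \<ge> 0" "square_integrable u" "((\<lambda>r. incr u r / \<bar>r\<bar>) \<longlongrightarrow> l) (at 0)"
    "H1a_sq a u = ennreal (l\<^sup>2)"
proof -
  obtain \<phi> where u_meas: "u \<in> borel_measurable lborel" and \<phi>: "H1a0_approx a u \<phi>"
    using assms by (auto simp: H1a0_def)
  define l where "l = lim (\<lambda>k. H1a_seminorm a (\<phi> k))"
  note lim = approx_incr_tendsto[OF u_meas \<phi>, folded l_def]
  have "(\<lambda>k. H1a_sq_smooth a (\<phi>' k)) \<longlonglongrightarrow> ennreal (l\<^sup>2)" if "H1a0_approx a u \<phi>'" for \<phi>'
  proof -
    have "lim (\<lambda>k. H1a_seminorm a (\<phi>' k)) = l"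
      using tendsto_unique[OF _ approx_incr_tendsto[OF u_meas that] lim] by simp
    then show ?thesis
      using approx_H1a_sq_smooth_tendsto[OF u_meas that] by simp
  qed
  then have "H1a_sq a u = ennreal (l\<^sup>2)"
    unfolding H1a_sq_def using \<phi> by (intro the_equality) (auto intro: LIMSEQ_unique)
  moreover have "(\<lambda>k. H1a_seminorm a (\<phi> k)) \<longlonglongrightarrow> l"
    using approx_seminorm_convergent[OF u_meas \<phi>] unfolding l_def by (simp add: convergent_LIMSEQ_iff)
  then have "l \<ge> 0"
    by (rule LIMSEQ_le_const) (auto simp: H1a_seminorm_nonneg)
  ultimately show ?thesis
    using that lim approx_square_integrable[OF u_meas \<phi>] by blast
qed

end

section \<open>The limit \<open>s \<rightarrow> 1\<close>\<close>

context sphere_measure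
begin

lemma measurable_Hsa_integrand:
  assumes [measurable]: "u \<in> borel_measurable borel"
  shows "(\<lambda>(x, \<rho>). \<integral>\<^sup>+\<omega>. ennreal ((u x - u (x + \<rho> *\<^sub>R \<omega>))\<^sup>2 / \<bar>\<rho>\<bar> powr (1 + 2 * s)) \<partial>a)
    \<in> borel_measurable (lborel \<Otimes>\<^sub>M lborel)"
proof -
  have [measurable]: "(\<lambda>z. fst (fst z)) \<in> measurable ((lborel \<Otimes>\<^sub>M lborel) \<Otimes>\<^sub>M a) borel"
    "(\<lambda>z. snd (fst z)) \<in> measurable ((lborel \<Otimes>\<^sub>M lborel) \<Otimes>\<^sub>M a) (borel :: real measure)"
    by (auto intro: measurable_compose[OF measurable_fst] simp: measurable_lborel2)
  have "(\<lambda>z. ennreal ((u (fst (fst z)) - u (fst (fst z) + snd (fst z) *\<^sub>R snd z))\<^sup>2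
      / \<bar>snd (fst z)\<bar> powr (1 + 2 * s))) \<in> borel_measurable ((lborel \<Otimes>\<^sub>M lborel) \<Otimes>\<^sub>M a)"
    by measurable
  then have "(\<lambda>p. \<integral>\<^sup>+\<omega>. ennreal ((u (fst (fst (p, \<omega>))) - u (fst (fst (p, \<omega>)) + snd (fst (p, \<omega>)) *\<^sub>R snd (p, \<omega>)))\<^sup>2
      / \<bar>snd (fst (p, \<omega>))\<bar> powr (1 + 2 * s)) \<partial>a) \<in> borel_measurable (lborel \<Otimes>\<^sub>M lborel)"
    by (intro borel_measurable_nn_integral) (simp add: case_prod_beta')
  then show ?thesis
    by (simp add: case_prod_beta')
qed

lemma nn_integral_weighted_incr_sq:
  assumes [measurable]: "u \<in> borel_measurable borel"
  shows "(\<integral>\<^sup>+x. \<integral>\<^sup>+\<omega>. ennreal ((u x - u (x + \<rho> *\<^sub>R \<omega>))\<^sup>2 / \<bar>\<rho>\<bar> powr (1 + 2 * s)) \<partial>a \<partial>lborel)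
    = incr_sq u \<rho> * ennreal (1 / \<bar>\<rho>\<bar> powr (1 + 2 * s))"
proof -
  define c where "c = ennreal (1 / \<bar>\<rho>\<bar> powr (1 + 2 * s))"
  have [measurable]: "(\<lambda>p. ennreal ((u (fst p) - u (fst p + \<rho> *\<^sub>R snd p))\<^sup>2)) \<in> borel_measurable M"
    by measurable
  have "(\<integral>\<^sup>+\<omega>. ennreal ((u x - u (x + \<rho> *\<^sub>R \<omega>))\<^sup>2 / \<bar>\<rho>\<bar> powr (1 + 2 * s)) \<partial>a)
      = (\<integral>\<^sup>+\<omega>. ennreal ((u x - u (x + \<rho> *\<^sub>R \<omega>))\<^sup>2) \<partial>a) * c" for x
    unfolding c_def
    by (subst nn_integral_multc[symmetric]) (auto intro!: nn_integral_cong simp: ennreal_mult[symmetric] divide_inverse)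
  then have "(\<integral>\<^sup>+x. \<integral>\<^sup>+\<omega>. ennreal ((u x - u (x + \<rho> *\<^sub>R \<omega>))\<^sup>2 / \<bar>\<rho>\<bar> powr (1 + 2 * s)) \<partial>a \<partial>lborel)
      = (\<integral>\<^sup>+x. \<integral>\<^sup>+\<omega>. ennreal ((u x - u (x + \<rho> *\<^sub>R \<omega>))\<^sup>2) \<partial>a \<partial>lborel) * c"
    using borel_measurable_nn_integral_fst[of "\<lambda>p. ennreal ((u (fst p) - u (fst p + \<rho> *\<^sub>R snd p))\<^sup>2)"]
    by (simp add: nn_integral_multc)
  also have "(\<integral>\<^sup>+x. \<integral>\<^sup>+\<omega>. ennreal ((u x - u (x + \<rho> *\<^sub>R \<omega>))\<^sup>2) \<partial>a \<partial>lborel) = incr_sq u \<rho>"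
    unfolding incr_sq_def L2_norm_sq_def by (simp add: nn_integral_fst[symmetric])
  finally show ?thesis
    by (simp add: c_def)
qed

lemma Hsa_sq_eq_frac_energy:
  assumes "square_integrable u"
  shows "Hsa_sq a s u = frac_energy (\<lambda>\<rho>. (incr u \<rho>)\<^sup>2) s"
proof -
  have u: "u \<in> borel_measurable borel"
    using assms by (simp add: square_integrable_def)
  have "Hsa_sq a s u
      = (\<integral>\<^sup>+\<rho>. \<integral>\<^sup>+x. \<integral>\<^sup>+\<omega>. ennreal ((u x - u (x + \<rho> *\<^sub>R \<omega>))\<^sup>2 / \<bar>\<rho>\<bar> powr (1 + 2 * s)) \<partial>a \<partial>lborel \<partial>lborel)"
    unfolding Hsa_sq_def using lborel_pair.Fubini'[OF measurable_Hsa_integrand[OF u]] by simp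
  also have "\<dots> = frac_energy (\<lambda>\<rho>. (incr u \<rho>)\<^sup>2) s"
    unfolding frac_energy_def nn_integral_weighted_incr_sq[OF u]
    using square_integrable_incr(1)[OF assms] by (simp add: incr_def)
  finally show ?thesis .
qed

lemma Hsa_sq_tendsto:
  assumes u: "square_integrable u" and "l \<ge> 0" and lim: "((\<lambda>r. incr u r / \<bar>r\<bar>) \<longlongrightarrow> l) (at 0)"
  shows "((\<lambda>s. ennreal (1 - s) * Hsa_sq a s u) \<longlongrightarrow> ennreal (l\<^sup>2)) (at_left 1)"
proof -
  have "((\<lambda>\<rho>. (incr u \<rho> / \<bar>\<rho>\<bar>)\<^sup>2) \<longlongrightarrow> l\<^sup>2) (at 0)"
    by (intro tendsto_intros lim)
  then have "((\<lambda>\<rho>. (incr u \<rho>)\<^sup>2 / \<rho>\<^sup>2) \<longlongrightarrow> l\<^sup>2) (at 0)"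
    by (simp add: power_divide)
  moreover have "(incr u \<rho>)\<^sup>2 \<le> (2 * sqrt (measure a (space a) * enn2real (L2_norm_sq lborel u)))\<^sup>2" for \<rho>
    by (rule power_mono[OF square_integrable_incr(2)[OF u] incr_nonneg])
  ultimately show ?thesis
    unfolding Hsa_sq_eq_frac_energy[OF u] using \<open>l \<ge> 0\<close> by (intro frac_energy_tendsto) auto
qed

end

theorem proposition5p4:
  fixes a :: "'a::euclidean_space measure" and \<Lambda> :: real and u :: "'a \<Rightarrow> real"
  assumes "spectral_measure \<Lambda> a"
    and "u \<in> H1a0 a"
  shows "((\<lambda>s. ennreal (1 - s) * Hsa_sq a s u) \<longlongrightarrow> H1a_sq a u) (at_left 1)"
proof -
  have "sets a = sets (restrict_space borel (sphere (0::'a) 1))" "emeasure a (space a) < \<infinity>"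
    using assms(1) by (auto simp: spectral_measure_def intro: le_less_trans)
  then interpret sphere_measure a
    by (intro sphere_measure.intro finite_measureI sphere_measure_axioms.intro) auto
  obtain l where "l \<ge> 0" "square_integrable u" "((\<lambda>r. incr u r / \<bar>r\<bar>) \<longlongrightarrow> l) (at 0)"
    "H1a_sq a u = ennreal (l\<^sup>2)"
    using H1a0_incr_tendsto[OF assms(2)] by blast
  then show ?thesis
    using Hsa_sq_tendsto by simp
qed

end
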